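(* Suppose Assumption A holds and $g_k$ satisfies Condition C. Consider the Algorithm with Option I (so $y_k=x_k$). (1) (FS): If $\eta_k=\eta\in[0,1)$ for all $k$, $\iota_0\in\left[0,\sqrt{\frac{1-\eta}{2}}\right)$, $\sum_{k=0}^\infty\delta_k^2<\infty$, and $\alpha_k=\alpha\le\frac{1-\eta}{2L}$ for all $k$, then there is a constant $C<\infty$ such that for all $K\ge1$, $\min_{k=0,\dots,K-1}\|R^{true}_{\alpha}(x_k)\|^2\le\frac{C}{K}$. (2) (EX): If $\tilde\eta_k=\tilde\eta\in[0,1)$ for all $k$, $\tilde\iota_0\in\left[0,\sqrt{\frac{1-\tilde\eta}{2}}\right)$, $\sum_{k=0}^\infty\tilde\delta_k^2<\infty$, and $\alpha_k=\alpha\le\frac{1-\tilde\eta}{2L}$ for all $k$, then there is a constant $C<\infty$ such that for all $K\ge1$, $\min_{k=0,\dots,K-1}\mathbb E[\|R^{true}_{\alpha}(x_k)\|^2]\le\frac{C}{K}$.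
   Context: Problem: minimize $\phi(x)=f(x)+h(x)$ over $x\in\mathbb{R}^d$. Assumption A: $f:\mathbb{R}^d\to\mathbb{R}$ is continuously differentiable with $L$-Lipschitz continuous gradient ($L>0$), and $h:\mathbb{R}^d\to\mathbb{R}\cup\{+\infty\}$ is closed, convex and proper; $\phi^*=\inf\phi>-\infty$ ($f$ need not be convex). Two settings: the finite-sum problem (FS), $f(x)=\frac1N\sum_{i=1}^N F(x,\xi_i)$ over a dataset $\mathcal S=\{\xi_1,\dots,\xi_N\}$; and the expectation problem (EX), $f(x)=\mathbb E_{\xi\sim\mathcal P}[F(x,\xi)]$. For $\alpha>0$, $\mathrm{prox}_{\alpha,h}(y)=\arg\min_{x\in\mathbb{R}^d}\{h(x)+\frac{1}{2\alpha}\|x-y\|^2\}$. Algorithm: given $x_0\in\mathbb{R}^d$, $y_0=x_0$, step sizes $\alpha_k>0$ and parameters $\beta_k$, for $k=0,1,2,\dots$: compute an estimate $g_k$ of $\nabla f(y_k)$ (possibly biased, possibly random); set $x_{k+1}=\mathrm{prox}_{\alpha_k,h}(y_k-\alpha_kg_k)$; under Option I set $y_{k+1}=x_{k+1}$, under Option II set $y_{k+1}=x_{k+1}+\beta_{k+1}(x_{k+1}-x_k)$. Define $R_{\alpha_k}(y_k)=\frac{1}{\alpha_k}(y_k-x_{k+1})$, $\hat x_{k+1}=\mathrm{prox}_{\alpha_k,h}(y_k-\alpha_k\nabla f(y_k))$ and $R^{true}_{\alpha_k}(y_k)=\frac{1}{\alpha_k}(y_k-\hat x_{k+1})$. Let $\mathcal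 G_k$ be the $\sigma$-algebra generated by $x_0,g_0,\dots,g_{k-1}$ (so $x_k,y_k$ are $\mathcal G_k$-measurable), $\mathbb E_k[\cdot]=\mathbb E[\cdot\mid\mathcal G_k]$, and $\mathbb E[\cdot]$ is total expectation. Condition C, required for all $k\ge0$: in (FS), $\|g_k-\nabla f(y_k)\|\le\frac{\eta_k}{2}\|R_{\alpha_k}(y_k)\|+\iota_0\delta_k$ with $\eta_k\in[0,1)$, $\iota_0\ge0$, $\delta_k\ge0$; in (EX), $\mathbb E_k[\|g_k-\nabla f(y_k)\|^2]\le\frac{\tilde\eta_k^2}{4}\|\mathbb E_k[R_{\alpha_k}(y_k)]\|^2+\tilde\iota_0^2\tilde\delta_k^2$ with $\tilde\eta_k\in[0,1)$, $\tilde\iota_0\ge0$, $\tilde\delta_k\ge0$. *)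

theory Defs
  imports "HOL-Analysis.Analysis" "HOL-Probability.Probability"
begin

definition epigraph :: "('a \<Rightarrow> ereal) \<Rightarrow> ('a \<times> real) set" where
  "epigraph h = {(x, t). h x \<le> ereal t}"

definition closed_convex_proper :: "('a::real_normed_vector \<Rightarrow> ereal) \<Rightarrow> bool" where
  "closed_convex_proper h \<longleftrightarrow>
     closed (epigraph h) \<and> convex (epigraph h) \<and>
     (\<forall>x. h x \<noteq> -\<infinity>) \<and> (\<exists>x. h x \<noteq> \<infinity>)"

definition prox :: "real \<Rightarrow> ('a::real_normed_vector \<Rightarrow> ereal) \<Rightarrow> 'a \<Rightarrow> 'a" where
  "prox \<alpha> h y = (THE x. \<forall>z. h x + ereal (norm (x - y)^2 / (2 * \<alpha>))
                              \<le> h z + ereal (norm (z - y)^2 / (2 * \<alpha>)))"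

definition Rtrue :: "real \<Rightarrow> ('a::real_normed_vector \<Rightarrow> ereal) \<Rightarrow> ('a \<Rightarrow> 'a) \<Rightarrow> 'a \<Rightarrow> 'a" where
  "Rtrue \<alpha> h gradf y = (1 / \<alpha>) *\<^sub>R (y - prox \<alpha> h (y - \<alpha> *\<^sub>R gradf y))"

definition assumptionA ::
  "('a::euclidean_space \<Rightarrow> real) \<Rightarrow> ('a \<Rightarrow> 'a) \<Rightarrow> ('a \<Rightarrow> ereal) \<Rightarrow> real \<Rightarrow> bool" where
  "assumptionA f gradf h L \<longleftrightarrow>
     L > 0 \<and>
     (\<forall>x. (f has_derivative (\<lambda>v. gradf x \<bullet> v)) (at x)) \<and>
     continuous_on UNIV gradf \<and>
     (\<forall>x y. norm (gradf x - gradf y) \<le> L * norm (x - y)) \<and>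
     closed_convex_proper h \<and>
     (\<exists>m::real. \<forall>x. ereal m \<le> ereal (f x) + h x)"

text \<open>G_k: sigma-algebra generated by (the constant x_0 and) g_0, ..., g_{k-1}.\<close>
definition gen_sigma :: "'w measure \<Rightarrow> (nat \<Rightarrow> 'w \<Rightarrow> 'a::topological_space) \<Rightarrow> nat \<Rightarrow> 'w measure" where
  "gen_sigma M g k = sigma (space M) {g j -` A \<inter> space M | j A. j < k \<and> A \<in> sets borel}"

definition vec_cond_exp :: "'w measure \<Rightarrow> 'w measure \<Rightarrow> ('w \<Rightarrow> 'a::euclidean_space) \<Rightarrow> 'w \<Rightarrow> 'a" where
  "vec_cond_exp M F X \<omega> = (\<Sum>b\<in>Basis. real_cond_exp M F (\<lambda>\<omega>. X \<omega> \<bullet> b) \<omega> *\<^sub>R b)"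

end

theory Submission
  imports Defs
begin

(* By the variational inequality of the proximal map and the descent lemma for the
   L-smooth part f, one inexact step decreases phi = f + h by alpha/4 times the squared computed
   residual, up to alpha times the square of the absolute part of the gradient error. Since phi is
   bounded below, summing this descent bounds the sum of the squared residuals; nonexpansiveness of
   prox bounds the distance between the true and the computed residual by the gradient error, so
   the squared true residuals have bounded partial sums and their minimum over K steps is O(1/K).
   In the expectation setting, conditional Jensen turns the relative bound on the gradient error
   into a bound in expectation, and finiteness of all expectations is propagated along the
   recursion before the same telescoping argument applies. *)

section \<open>Closed convex proper functions\<close>

lemma closed_convex_proper_real:
  assumes "closed_convex_proper h" and "h x \<noteq> \<infinity>"
  shows "h x = ereal (real_of_ereal (h x))"
  using assms unfolding closed_convex_proper_def by (cases "h x") auto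

lemma closed_convex_proper_epigraph:
  assumes "closed_convex_proper h" and "h x \<noteq> \<infinity>"
  shows "(x, real_of_ereal (h x)) \<in> epigraph h"
  using closed_convex_proper_real[OF assms] unfolding epigraph_def by simp

lemma closed_convex_proper_convex:
  assumes H: "closed_convex_proper h" and hx: "h x \<noteq> \<infinity>" and hy: "h y \<noteq> \<infinity>"
    and t: "0 \<le> t" "t \<le> 1"
  shows "h ((1 - t) *\<^sub>R x + t *\<^sub>R y) \<le> ereal ((1 - t) * real_of_ereal (h x) + t * real_of_ereal (h y))"
proof -
  have "convex (epigraph h)" using H unfolding closed_convex_proper_def by simp
  then have "(1 - t) *\<^sub>R (x, real_of_ereal (h x)) + t *\<^sub>R (y, real_of_ereal (h y)) \<in> epigraph h"
    using closed_convex_proper_epigraph[OF H hx] closed_convex_proper_epigraph[OF H hy] t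
    unfolding convex_def by (metis add.commute diff_add_cancel diff_ge_0_iff_ge)
  then show ?thesis unfolding epigraph_def by (simp add: scaleR_Pair)
qed

lemma closed_convex_proper_borel_measurable:
  fixes h :: "'a::euclidean_space \<Rightarrow> ereal"
  assumes H: "closed_convex_proper h"
  shows "h \<in> borel_measurable borel"
proof (rule borel_measurableI_le)
  fix y :: ereal
  have "closed {x. h x \<le> ereal t}" for t
  proof -
    have "closed ((\<lambda>x. (x, t)) -` epigraph h)"
      using H unfolding closed_convex_proper_def
      by (intro continuous_closed_vimage) (auto intro!: continuous_intros)
    then show ?thesis unfolding epigraph_def by simp
  qed
  moreover have "{x. h x \<le> -\<infinity>} = {}" using H unfolding closed_convex_proper_def by auto
  ultimately show "{x \<in> space borel. h x \<le> y} \<in> sets borel"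
    by (cases y) auto
qed

text \<open>Separate a point strictly below the graph from the closed convex epigraph.\<close>

lemma closed_convex_proper_affine_minorant:
  fixes h :: "'a::euclidean_space \<Rightarrow> ereal"
  assumes H: "closed_convex_proper h"
  obtains u c where "\<And>z. ereal (u \<bullet> z + c) \<le> h z"
proof -
  obtain x1 where x1: "h x1 \<noteq> \<infinity>" using H unfolding closed_convex_proper_def by auto
  define r1 where "r1 = real_of_ereal (h x1)"
  have hx1: "h x1 = ereal r1" using closed_convex_proper_real[OF H x1] r1_def by simp
  have in_epi: "(x1, r1) \<in> epigraph h" using hx1 unfolding epigraph_def by simp
  have "(x1, r1 - 1) \<notin> epigraph h" using hx1 unfolding epigraph_def by simp
  moreover have "closed (epigraph h)" "convex (epigraph h)"
    using H unfolding closed_convex_proper_def by auto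
  ultimately obtain a b where ab: "a \<bullet> (x1, r1 - 1) < b" "\<forall>w\<in>epigraph h. b < a \<bullet> w"
    using separating_hyperplane_closed_point by blast
  obtain v s where a: "a = (v, s)" by (cases a)
  have below: "b < v \<bullet> z + s * t" if "(z, t) \<in> epigraph h" for z t
    using ab(2) that a by (auto simp: inner_Pair)
  have s: "s > 0" using below[OF in_epi] ab(1) a by (simp add: inner_Pair algebra_simps)
  show ?thesis
  proof (rule that)
    fix z
    show "ereal ((- (1 / s) *\<^sub>R v) \<bullet> z + b / s) \<le> h z"
    proof (cases "h z = \<infinity>")
      case False
      have "b < v \<bullet> z + s * real_of_ereal (h z)"
        by (rule below[OF closed_convex_proper_epigraph[OF H False]])
      then have "(- (1 / s) *\<^sub>R v) \<bullet> z + b / s \<le> real_of_ereal (h z)"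
        using s by (simp add: field_simps)
      then show ?thesis using closed_convex_proper_real[OF H False] by (metis ereal_less_eq(3))
    qed simp
  qed
qed

section \<open>The proximal map\<close>

lemma le_of_square_le_linear:
  fixes r a A n :: real
  assumes "0 < a" "0 \<le> n" "r\<^sup>2 / (2 * a) \<le> A + n * r"
  shows "r \<le> 1 + (4 * a * \<bar>A\<bar> + 4 * a\<^sup>2 * n\<^sup>2)"
proof -
  have "r\<^sup>2 \<le> 2 * a * A + 2 * a * n * r"
    using assms by (simp add: pos_divide_le_eq algebra_simps)
  moreover have "4 * a * n * r \<le> r\<^sup>2 + 4 * a\<^sup>2 * n\<^sup>2"
    using zero_le_power2[of "r - 2 * a * n"] by (simp add: power2_eq_square algebra_simps)
  moreover have "a * A \<le> a * \<bar>A\<bar>" using assms(1) by (simp add: mult_left_mono)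
  ultimately have "r\<^sup>2 \<le> 4 * a * \<bar>A\<bar> + 4 * a\<^sup>2 * n\<^sup>2" by linarith
  moreover have "r \<le> r\<^sup>2 \<or> r \<le> 1" by (cases "r \<le> 1") (auto simp: power2_eq_square)
  moreover have "0 \<le> 4 * a * \<bar>A\<bar> + 4 * a\<^sup>2 * n\<^sup>2" using assms(1) by simp
  ultimately show ?thesis by linarith
qed

definition prox_minimizer :: "real \<Rightarrow> ('a::real_normed_vector \<Rightarrow> ereal) \<Rightarrow> 'a \<Rightarrow> 'a \<Rightarrow> bool" where
  "prox_minimizer \<alpha> h y p \<longleftrightarrow>
     (\<forall>z. h p + ereal ((norm (p - y))\<^sup>2 / (2 * \<alpha>)) \<le> h z + ereal ((norm (z - y))\<^sup>2 / (2 * \<alpha>)))"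

lemma prox_eq_The_prox_minimizer: "prox \<alpha> h y = (THE p. prox_minimizer \<alpha> h y p)"
  unfolding prox_def prox_minimizer_def ..

lemma bounded_epigraph_sublevel:
  fixes h :: "'a::euclidean_space \<Rightarrow> ereal"
  assumes a: "0 < \<alpha>" and minorant: "\<And>z. ereal (u \<bullet> z + c) \<le> h z"
  shows "bounded (epigraph h \<inter> {(z, t). t + (norm (z - y))\<^sup>2 / (2 * \<alpha>) \<le> c0})"
proof -
  define \<rho> where "\<rho> = 1 + (4 * \<alpha> * \<bar>c0 - c - u \<bullet> y\<bar> + 4 * \<alpha>\<^sup>2 * (norm u)\<^sup>2)"
  have "epigraph h \<inter> {(z, t). t + (norm (z - y))\<^sup>2 / (2 * \<alpha>) \<le> c0}
      \<subseteq> cball y \<rho> \<times> {c - norm u * (norm y + \<rho>) .. c0}"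
  proof
    fix w assume "w \<in> epigraph h \<inter> {(z, t). t + (norm (z - y))\<^sup>2 / (2 * \<alpha>) \<le> c0}"
    then obtain z t where w: "w = (z, t)" and hz: "h z \<le> ereal t"
      and Q: "t + (norm (z - y))\<^sup>2 / (2 * \<alpha>) \<le> c0"
      by (auto simp: epigraph_def)
    have "ereal (u \<bullet> z + c) \<le> ereal t" by (rule order_trans[OF minorant hz])
    then have ut: "u \<bullet> z + c \<le> t" by simp
    have "- (norm u * norm (z - y)) \<le> u \<bullet> (z - y)"
      using Cauchy_Schwarz_ineq2[of u "z - y"] by linarith
    then have "(norm (z - y))\<^sup>2 / (2 * \<alpha>) \<le> (c0 - c - u \<bullet> y) + norm u * norm (z - y)"
      using Q ut by (simp add: inner_diff_right)
    then have zy: "norm (z - y) \<le> \<rho>"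
      unfolding \<rho>_def using le_of_square_le_linear[OF a norm_ge_zero] by blast
    have "- (norm u * norm z) \<le> u \<bullet> z" using Cauchy_Schwarz_ineq2[of u z] by linarith
    moreover have "norm u * norm z \<le> norm u * (norm y + \<rho>)"
      using zy norm_triangle_ineq2[of z y] by (intro mult_left_mono) auto
    moreover have "t \<le> c0" using Q a by (smt (verit) divide_nonneg_pos zero_le_power2)
    ultimately show "w \<in> cball y \<rho> \<times> {c - norm u * (norm y + \<rho>) .. c0}"
      using w ut zy by (auto simp: dist_norm norm_minus_commute)
  qed
  then show ?thesis by (rule bounded_subset[OF bounded_Times[OF bounded_cball bounded_closed_interval]])
qed

text \<open>The minimum is attained on the compact part of the epigraph below the value of the objective
  at some point of the domain; compactness comes from the affine minorant of h.\<close>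

lemma prox_minimizer_exists:
  fixes h :: "'a::euclidean_space \<Rightarrow> ereal"
  assumes H: "closed_convex_proper h" and a: "0 < \<alpha>"
  obtains p where "prox_minimizer \<alpha> h y p"
proof -
  obtain u c where "\<And>z. ereal (u \<bullet> z + c) \<le> h z"
    using closed_convex_proper_affine_minorant[OF H] by blast
  obtain x1 where x1: "h x1 \<noteq> \<infinity>" using H unfolding closed_convex_proper_def by auto
  define Q where "Q = (\<lambda>(z, t). t + (norm (z - y))\<^sup>2 / (2 * \<alpha>))"
  define c0 where "c0 = Q (x1, real_of_ereal (h x1))"
  define S where "S = epigraph h \<inter> {(z, t). t + (norm (z - y))\<^sup>2 / (2 * \<alpha>) \<le> c0}"
  have S: "S = epigraph h \<inter> {w. Q w \<le> c0}" unfolding S_def Q_def by auto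
  have contQ: "continuous_on UNIV Q"
    unfolding Q_def case_prod_beta using a by (intro continuous_intros) auto
  have "closed S"
    using H unfolding S closed_convex_proper_def
    by (intro closed_Int closed_Collect_le contQ continuous_on_const) auto
  moreover have "bounded S"
    unfolding S_def by (rule bounded_epigraph_sublevel) fact+
  moreover have "(x1, real_of_ereal (h x1)) \<in> S"
    unfolding S c0_def using closed_convex_proper_epigraph[OF H x1] by simp
  ultimately have "compact S" "S \<noteq> {}" by (auto simp: compact_eq_bounded_closed)
  then obtain w0 where w0: "w0 \<in> S" "\<And>w. w \<in> S \<Longrightarrow> Q w0 \<le> Q w"
    using continuous_attains_inf continuous_on_subset[OF contQ subset_UNIV] by metis
  obtain p tp where w0p: "w0 = (p, tp)" by (cases w0)
  have hp: "h p \<le> ereal tp" using w0(1) w0p unfolding S epigraph_def by simp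
  show ?thesis
  proof (rule that, unfold prox_minimizer_def, intro allI)
    fix z
    show "h p + ereal ((norm (p - y))\<^sup>2 / (2 * \<alpha>)) \<le> h z + ereal ((norm (z - y))\<^sup>2 / (2 * \<alpha>))"
    proof (cases "h z = \<infinity>")
      case False
      define rz where "rz = real_of_ereal (h z)"
      have hz: "h z = ereal rz" using closed_convex_proper_real[OF H False] rz_def by simp
      have "Q w0 \<le> Q (z, rz)"
      proof (cases "(z, rz) \<in> S")
        case False
        then show ?thesis using w0(1) closed_convex_proper_epigraph[OF H \<open>h z \<noteq> \<infinity>\<close>]
          unfolding S rz_def by auto
      qed (rule w0(2))
      then have "ereal tp + ereal ((norm (p - y))\<^sup>2 / (2 * \<alpha>)) \<le> h z + ereal ((norm (z - y))\<^sup>2 / (2 * \<alpha>))"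
        unfolding Q_def w0p hz by simp
      then show ?thesis using add_right_mono[OF hp] order_trans by blast
    qed simp
  qed
qed

lemma prox_minimizer_finite:
  assumes H: "closed_convex_proper h" and p: "prox_minimizer \<alpha> h y p"
  shows "h p \<noteq> \<infinity>"
proof
  assume hp: "h p = \<infinity>"
  obtain x1 where x1: "h x1 \<noteq> \<infinity>" using H unfolding closed_convex_proper_def by auto
  have "h p + ereal ((norm (p - y))\<^sup>2 / (2 * \<alpha>)) \<le> h x1 + ereal ((norm (x1 - y))\<^sup>2 / (2 * \<alpha>))"
    using p unfolding prox_minimizer_def by blast
  moreover obtain r where "h x1 = ereal r" using closed_convex_proper_real[OF H x1] by blast
  ultimately show False using hp by simp
qed

lemma le_of_forall_le_add_mult:
  fixes a b c :: real
  assumes "\<And>t. 0 < t \<Longrightarrow> t \<le> 1 \<Longrightarrow> a \<le> b + t * c"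
  shows "a \<le> b"
proof (rule ccontr)
  assume "\<not> a \<le> b"
  show False
  proof (cases "c \<le> 0")
    case False
    define t where "t = min 1 ((a - b) / (2 * c))"
    have "0 < t" "t \<le> 1" unfolding t_def using \<open>\<not> a \<le> b\<close> False by auto
    moreover have "t * c \<le> (a - b) / 2"
      using False mult_right_mono[of t "(a - b) / (2 * c)" c] unfolding t_def by simp
    ultimately show False using assms \<open>\<not> a \<le> b\<close> by fastforce
  qed (use assms[of 1] \<open>\<not> a \<le> b\<close> in \<open>simp add: mult_le_0_iff\<close>)
qed

text \<open>First-order optimality: compare the minimizer with the points of the segment towards z, which
  by convexity of h cost at most the convex combination of the values, and let the segment shrink.\<close>

lemma prox_minimizer_variational_ineq:
  fixes h :: "'a::real_inner \<Rightarrow> ereal"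
  assumes H: "closed_convex_proper h" and a: "0 < \<alpha>" and p: "prox_minimizer \<alpha> h y p"
    and hz: "h z \<noteq> \<infinity>"
  shows "real_of_ereal (h p) + ((y - p) \<bullet> (z - p)) / \<alpha> \<le> real_of_ereal (h z)"
proof -
  have hp: "h p \<noteq> \<infinity>" by (rule prox_minimizer_finite[OF H p])
  define A where "A = real_of_ereal (h p)"
  define B where "B = real_of_ereal (h z)"
  have hpA: "h p = ereal A" using closed_convex_proper_real[OF H hp] A_def by simp
  define I where "I = (y - p) \<bullet> (z - p)"
  define N where "N = (norm (z - p))\<^sup>2"
  have "A \<le> B - I / \<alpha> + t * (N / (2 * \<alpha>))" if t: "0 < t" "t \<le> 1" for t
  proof -
    define zt where "zt = (1 - t) *\<^sub>R p + t *\<^sub>R z"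
    have zt: "zt - y = (p - y) + t *\<^sub>R (z - p)" unfolding zt_def by (simp add: algebra_simps)
    have nzt: "(norm (zt - y))\<^sup>2 = (norm (p - y))\<^sup>2 - 2 * t * I + t\<^sup>2 * N"
      unfolding zt I_def N_def power2_norm_eq_inner by (simp add: inner_add_left inner_add_right
          inner_diff_left inner_diff_right inner_commute power2_eq_square algebra_simps)
    have "h p + ereal ((norm (p - y))\<^sup>2 / (2 * \<alpha>)) \<le> h zt + ereal ((norm (zt - y))\<^sup>2 / (2 * \<alpha>))"
      using p unfolding prox_minimizer_def by blast
    also have "\<dots> \<le> ereal ((1 - t) * A + t * B) + ereal ((norm (zt - y))\<^sup>2 / (2 * \<alpha>))"
      using closed_convex_proper_convex[OF H hp hz, of t] t unfolding zt_def A_def B_def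
      by (intro add_right_mono) simp
    finally have "A + (norm (p - y))\<^sup>2 / (2 * \<alpha>)
        \<le> (1 - t) * A + t * B + ((norm (p - y))\<^sup>2 - 2 * t * I + t\<^sup>2 * N) / (2 * \<alpha>)"
      using hpA nzt by simp
    moreover have "((norm (p - y))\<^sup>2 - 2 * t * I + t\<^sup>2 * N) / (2 * \<alpha>)
        = (norm (p - y))\<^sup>2 / (2 * \<alpha>) + (t\<^sup>2 * N - 2 * t * I) / (2 * \<alpha>)"
      by (simp add: add_divide_distrib diff_divide_distrib)
    moreover have "(1 - t) * A = A - t * A" by (simp add: algebra_simps)
    ultimately have "t * A \<le> t * B + (t\<^sup>2 * N - 2 * t * I) / (2 * \<alpha>)"
      by linarith
    also have "\<dots> = t * (B - I / \<alpha> + t * (N / (2 * \<alpha>)))"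
      using a by (simp add: field_simps power2_eq_square)
    finally show ?thesis using t(1) by simp
  qed
  then have "A \<le> B - I / \<alpha>" by (rule le_of_forall_le_add_mult)
  then show ?thesis unfolding A_def B_def I_def by linarith
qed

lemma prox_minimizer_firmly_nonexpansive:
  fixes h :: "'a::real_inner \<Rightarrow> ereal"
  assumes H: "closed_convex_proper h" and a: "0 < \<alpha>"
    and p: "prox_minimizer \<alpha> h u p" and q: "prox_minimizer \<alpha> h v q"
  shows "(norm (p - q))\<^sup>2 \<le> (u - v) \<bullet> (p - q)"
proof -
  have "real_of_ereal (h p) + ((u - p) \<bullet> (q - p)) / \<alpha> \<le> real_of_ereal (h q)"
    by (rule prox_minimizer_variational_ineq[OF H a p prox_minimizer_finite[OF H q]])
  moreover have "real_of_ereal (h q) + ((v - q) \<bullet> (p - q)) / \<alpha> \<le> real_of_ereal (h p)"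
    by (rule prox_minimizer_variational_ineq[OF H a q prox_minimizer_finite[OF H p]])
  ultimately have "((u - p) \<bullet> (q - p) + (v - q) \<bullet> (p - q)) / \<alpha> \<le> 0"
    by (simp add: add_divide_distrib)
  then have "(u - p) \<bullet> (q - p) + (v - q) \<bullet> (p - q) \<le> 0"
    using a by (simp add: divide_le_0_iff)
  moreover have "(u - p) \<bullet> (q - p) + (v - q) \<bullet> (p - q) = (norm (p - q))\<^sup>2 - (u - v) \<bullet> (p - q)"
    unfolding power2_norm_eq_inner by (simp add: inner_diff_left inner_diff_right inner_commute)
  ultimately show ?thesis by linarith
qed

lemma prox_minimizer_unique:
  fixes h :: "'a::real_inner \<Rightarrow> ereal"
  assumes "closed_convex_proper h" and "0 < \<alpha>"
    and "prox_minimizer \<alpha> h y p" and "prox_minimizer \<alpha> h y q"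
  shows "p = q"
  using prox_minimizer_firmly_nonexpansive[OF assms] by simp

lemma prox_minimizer_prox:
  fixes h :: "'a::euclidean_space \<Rightarrow> ereal"
  assumes H: "closed_convex_proper h" and a: "0 < \<alpha>"
  shows "prox_minimizer \<alpha> h y (prox \<alpha> h y)"
proof -
  obtain p where "prox_minimizer \<alpha> h y p" using prox_minimizer_exists[OF H a] .
  then have "\<exists>!p. prox_minimizer \<alpha> h y p" using prox_minimizer_unique[OF H a] by blast
  then show ?thesis unfolding prox_eq_The_prox_minimizer by (rule theI')
qed

lemma prox_finite:
  fixes h :: "'a::euclidean_space \<Rightarrow> ereal"
  assumes "closed_convex_proper h" and "0 < \<alpha>"
  shows "h (prox \<alpha> h y) \<noteq> \<infinity>"
  using prox_minimizer_finite[OF assms(1) prox_minimizer_prox[OF assms]] .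

lemma prox_variational_ineq:
  fixes h :: "'a::euclidean_space \<Rightarrow> ereal"
  assumes "closed_convex_proper h" and "0 < \<alpha>" and "h z \<noteq> \<infinity>"
  shows "real_of_ereal (h (prox \<alpha> h y)) + ((y - prox \<alpha> h y) \<bullet> (z - prox \<alpha> h y)) / \<alpha>
           \<le> real_of_ereal (h z)"
  using prox_minimizer_variational_ineq[OF assms(1,2) prox_minimizer_prox[OF assms(1,2)] assms(3)] .

lemma prox_nonexpansive:
  fixes h :: "'a::euclidean_space \<Rightarrow> ereal"
  assumes "closed_convex_proper h" and "0 < \<alpha>"
  shows "norm (prox \<alpha> h u - prox \<alpha> h v) \<le> norm (u - v)"
proof -
  have "(norm (prox \<alpha> h u - prox \<alpha> h v))\<^sup>2 \<le> norm (u - v) * norm (prox \<alpha> h u - prox \<alpha> h v)"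
    using prox_minimizer_firmly_nonexpansive[OF assms prox_minimizer_prox[OF assms]
        prox_minimizer_prox[OF assms]] norm_cauchy_schwarz order_trans by blast
  then show ?thesis
    by (cases "prox \<alpha> h u = prox \<alpha> h v") (auto simp: power2_eq_square intro: mult_right_le_imp_le)
qed

lemma continuous_on_prox:
  fixes h :: "'a::euclidean_space \<Rightarrow> ereal"
  assumes "closed_convex_proper h" and "0 < \<alpha>"
  shows "continuous_on UNIV (prox \<alpha> h)"
  by (rule lipschitz_on_continuous_on[of 1])
    (auto intro!: lipschitz_onI simp: dist_norm prox_nonexpansive[OF assms])

section \<open>One inexact proximal gradient step\<close>

lemma assumptionA_closed_convex_proper: "assumptionA f gradf h L \<Longrightarrow> closed_convex_proper h"
  unfolding assumptionA_def by simp

lemma assumptionA_L_pos: "assumptionA f gradf h L \<Longrightarrow> 0 < L"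
  unfolding assumptionA_def by simp

lemma assumptionA_borel_measurable:
  assumes "assumptionA f gradf h L"
  shows "f \<in> borel_measurable borel" and "gradf \<in> borel_measurable borel"
proof -
  have "\<And>x. (f has_derivative (\<lambda>v. gradf x \<bullet> v)) (at x)" and "continuous_on UNIV gradf"
    using assms unfolding assumptionA_def by auto
  then show "f \<in> borel_measurable borel" and "gradf \<in> borel_measurable borel"
    by (auto intro!: borel_measurable_continuous_onI continuous_at_imp_continuous_on
        has_derivative_continuous)
qed

definition phi_star :: "('a \<Rightarrow> real) \<Rightarrow> ('a \<Rightarrow> ereal) \<Rightarrow> real" where
  "phi_star f h = (INF z \<in> {z. h z \<noteq> \<infinity>}. f z + real_of_ereal (h z))"

lemma phi_star_le:
  assumes A: "assumptionA f gradf h L" and hz: "h z \<noteq> \<infinity>"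
  shows "phi_star f h \<le> f z + real_of_ereal (h z)"
  unfolding phi_star_def
proof (rule cINF_lower)
  show "z \<in> {z. h z \<noteq> \<infinity>}" using hz by simp
  obtain m where m: "\<And>x. ereal m \<le> ereal (f x) + h x" using A unfolding assumptionA_def by auto
  have "m \<le> f x + real_of_ereal (h x)" if "h x \<noteq> \<infinity>" for x
    using m[of x] closed_convex_proper_real[OF assumptionA_closed_convex_proper[OF A] that]
    by (metis ereal_less_eq(3) plus_ereal.simps(1))
  then show "bdd_below ((\<lambda>z. f z + real_of_ereal (h z)) ` {z. h z \<noteq> \<infinity>})"
    by (intro bdd_belowI[of _ m]) auto
qed

lemma assumptionA_descent:
  fixes f :: "'a::euclidean_space \<Rightarrow> real"
  assumes A: "assumptionA f gradf h L"
  shows "f y \<le> f x + gradf x \<bullet> (y - x) + L * (norm (y - x))\<^sup>2"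
proof -
  define d where "d = y - x"
  define \<phi> where "\<phi> = (\<lambda>t::real. f (x + t *\<^sub>R d))"
  have fd: "\<And>p. (f has_derivative (\<lambda>v. gradf p \<bullet> v)) (at p)"
    and Lip: "\<And>a b. norm (gradf a - gradf b) \<le> L * norm (a - b)" and L0: "L > 0"
    using A unfolding assumptionA_def by auto
  have "(\<phi> has_real_derivative (gradf (x + t *\<^sub>R d) \<bullet> d)) (at t)" for t
    unfolding \<phi>_def has_field_derivative_def
    by (rule has_derivative_eq_rhs[OF has_derivative_compose[OF _ fd]])
      (auto intro!: derivative_eq_intros simp: fun_eq_iff)
  then obtain z where z: "0 < z" "z < 1" "\<phi> 1 - \<phi> 0 = gradf (x + z *\<^sub>R d) \<bullet> d"
    using MVT2[of 0 1 \<phi> "\<lambda>t. gradf (x + t *\<^sub>R d) \<bullet> d"] by auto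
  then have "f y - f x - gradf x \<bullet> d = (gradf (x + z *\<^sub>R d) - gradf x) \<bullet> d"
    unfolding \<phi>_def d_def by (simp add: inner_diff_left)
  also have "\<dots> \<le> norm (gradf (x + z *\<^sub>R d) - gradf x) * norm d" by (rule norm_cauchy_schwarz)
  also have "\<dots> \<le> (L * (z * norm d)) * norm d"
    using Lip[of "x + z *\<^sub>R d" x] z by (intro mult_right_mono) auto
  also have "\<dots> \<le> L * (norm d)\<^sup>2"
    using z L0 mult_right_mono[of z 1 "L * (norm d)\<^sup>2"] by (simp add: power2_eq_square mult_ac)
  finally show ?thesis unfolding d_def by simp
qed

lemma prox_grad_step:
  fixes f :: "'a::euclidean_space \<Rightarrow> real" and h :: "'a \<Rightarrow> ereal" and x g :: 'a and \<alpha> :: real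
  defines "p \<equiv> prox \<alpha> h (x - \<alpha> *\<^sub>R g)"
  assumes A: "assumptionA f gradf h L" and a: "0 < \<alpha>" and hx: "h x \<noteq> \<infinity>"
  shows "f p + real_of_ereal (h p) \<le> f x + real_of_ereal (h x) - (norm (x - p))\<^sup>2 / \<alpha>
           + norm (g - gradf x) * norm (x - p) + L * (norm (x - p))\<^sup>2"
proof -
  have "real_of_ereal (h p) + ((x - \<alpha> *\<^sub>R g - p) \<bullet> (x - p)) / \<alpha> \<le> real_of_ereal (h x)"
    unfolding p_def by (rule prox_variational_ineq[OF assumptionA_closed_convex_proper[OF A] a hx])
  moreover have "(x - \<alpha> *\<^sub>R g - p) \<bullet> (x - p) = (norm (x - p))\<^sup>2 - \<alpha> * (g \<bullet> (x - p))"
    unfolding power2_norm_eq_inner by (simp add: inner_diff_left algebra_simps)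
  then have "((x - \<alpha> *\<^sub>R g - p) \<bullet> (x - p)) / \<alpha> = (norm (x - p))\<^sup>2 / \<alpha> - g \<bullet> (x - p)"
    using a by (simp add: diff_divide_distrib)
  moreover have "f p \<le> f x + gradf x \<bullet> (p - x) + L * (norm (p - x))\<^sup>2"
    by (rule assumptionA_descent[OF A])
  moreover have "gradf x \<bullet> (p - x) = - (gradf x \<bullet> (x - p))" "norm (p - x) = norm (x - p)"
    by (simp_all add: inner_diff_right norm_minus_commute)
  moreover have "(g - gradf x) \<bullet> (x - p) \<le> norm (g - gradf x) * norm (x - p)"
    by (rule norm_cauchy_schwarz)
  ultimately show ?thesis by (simp add: inner_diff_left)
qed

text \<open>Both settings use this step estimate: the finite-sum setting with the relative error bound of
  Condition C, the expectation setting with \<eta> = 0 and \<epsilon> the full gradient error.\<close>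

lemma prox_grad_step_decrease:
  fixes f :: "'a::euclidean_space \<Rightarrow> real" and h :: "'a \<Rightarrow> ereal" and x g :: 'a and \<alpha> :: real
  defines "p \<equiv> prox \<alpha> h (x - \<alpha> *\<^sub>R g)"
  assumes A: "assumptionA f gradf h L" and a: "0 < \<alpha>" and hx: "h x \<noteq> \<infinity>"
    and step: "\<alpha> \<le> (1 - \<eta>) / (2 * L)"
    and err: "norm (g - gradf x) \<le> \<eta> / 2 * norm ((1 / \<alpha>) *\<^sub>R (x - p)) + \<epsilon>"
  shows "f p + real_of_ereal (h p) + \<alpha> / 4 * (norm ((1 / \<alpha>) *\<^sub>R (x - p)))\<^sup>2
           \<le> f x + real_of_ereal (h x) + \<alpha> * \<epsilon>\<^sup>2"
proof -
  define D where "D = norm (x - p)"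
  define e where "e = norm (g - gradf x)"
  have R: "norm ((1 / \<alpha>) *\<^sub>R (x - p)) = D / \<alpha>" unfolding D_def using a by simp
  have "\<alpha> * D * e \<le> \<alpha> * D * (\<eta> / 2 * (D / \<alpha>) + \<epsilon>)"
    using err a unfolding R D_def e_def by (intro mult_left_mono) auto
  also have "\<alpha> * D * (\<eta> / 2 * (D / \<alpha>) + \<epsilon>) = \<eta> * D\<^sup>2 / 2 + \<alpha> * D * \<epsilon>"
    using a by (simp add: field_simps power2_eq_square)
  finally have 1: "\<alpha> * D * e \<le> \<eta> * D\<^sup>2 / 2 + \<alpha> * D * \<epsilon>" .
  have "L * \<alpha> \<le> (1 - \<eta>) / 2"
    using step assumptionA_L_pos[OF A] by (simp add: pos_le_divide_eq mult_ac)
  then have "L * \<alpha> * D\<^sup>2 \<le> (1 - \<eta>) / 2 * D\<^sup>2" by (rule mult_right_mono) simp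
  then have 2: "L * \<alpha> * D\<^sup>2 \<le> D\<^sup>2 / 2 - \<eta> * D\<^sup>2 / 2" by (simp add: algebra_simps)
  have 3: "\<alpha> * D * \<epsilon> \<le> D\<^sup>2 / 4 + \<alpha>\<^sup>2 * \<epsilon>\<^sup>2"
    using zero_le_power2[of "D - 2 * \<alpha> * \<epsilon>"] by (simp add: power2_eq_square algebra_simps)
  have "\<alpha> * (- D\<^sup>2 / \<alpha> + e * D + L * D\<^sup>2) = - D\<^sup>2 + \<alpha> * D * e + L * \<alpha> * D\<^sup>2"
    using a by (simp add: field_simps)
  also have "\<dots> \<le> \<alpha>\<^sup>2 * \<epsilon>\<^sup>2 - D\<^sup>2 / 4" using 1 2 3 by linarith
  also have "\<dots> = \<alpha> * (\<alpha> * \<epsilon>\<^sup>2 - \<alpha> / 4 * (D / \<alpha>)\<^sup>2)"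
    using a by (simp add: field_simps power2_eq_square)
  finally have "- D\<^sup>2 / \<alpha> + e * D + L * D\<^sup>2 \<le> \<alpha> * \<epsilon>\<^sup>2 - \<alpha> / 4 * (D / \<alpha>)\<^sup>2"
    using a by simp
  then show ?thesis
    using prox_grad_step[OF A a hx, of g]
    unfolding p_def[symmetric] D_def[symmetric] e_def[symmetric] R by linarith
qed

lemma norm_Rtrue_sq_le:
  fixes f :: "'a::euclidean_space \<Rightarrow> real"
  assumes A: "assumptionA f gradf h L" and a: "0 < \<alpha>" and hx: "h x \<noteq> \<infinity>"
    and step: "\<alpha> \<le> 1 / (2 * L)"
  shows "(norm (Rtrue \<alpha> h gradf x))\<^sup>2 \<le> 4 / \<alpha> * (f x + real_of_ereal (h x) - phi_star f h)"
proof -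
  have "f (prox \<alpha> h (x - \<alpha> *\<^sub>R gradf x)) + real_of_ereal (h (prox \<alpha> h (x - \<alpha> *\<^sub>R gradf x)))
      + \<alpha> / 4 * (norm (Rtrue \<alpha> h gradf x))\<^sup>2 \<le> f x + real_of_ereal (h x)"
    using prox_grad_step_decrease[OF A a hx, of 0 "gradf x" 0] step unfolding Rtrue_def by simp
  moreover have "phi_star f h \<le> f (prox \<alpha> h (x - \<alpha> *\<^sub>R gradf x))
      + real_of_ereal (h (prox \<alpha> h (x - \<alpha> *\<^sub>R gradf x)))"
    by (rule phi_star_le[OF A prox_finite[OF assumptionA_closed_convex_proper[OF A] a]])
  ultimately show ?thesis using a by (simp add: field_simps)
qed

lemma norm_Rtrue_diff_le:
  fixes h :: "'a::euclidean_space \<Rightarrow> ereal"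
  assumes H: "closed_convex_proper h" and a: "0 < \<alpha>"
  shows "norm (Rtrue \<alpha> h gradf x - (1 / \<alpha>) *\<^sub>R (x - prox \<alpha> h (x - \<alpha> *\<^sub>R g)))
           \<le> norm (g - gradf x)"
proof -
  have "Rtrue \<alpha> h gradf x - (1 / \<alpha>) *\<^sub>R (x - prox \<alpha> h (x - \<alpha> *\<^sub>R g))
      = (1 / \<alpha>) *\<^sub>R (prox \<alpha> h (x - \<alpha> *\<^sub>R g) - prox \<alpha> h (x - \<alpha> *\<^sub>R gradf x))"
    unfolding Rtrue_def by (simp add: algebra_simps)
  moreover have "norm (prox \<alpha> h (x - \<alpha> *\<^sub>R g) - prox \<alpha> h (x - \<alpha> *\<^sub>R gradf x))
      \<le> norm (\<alpha> *\<^sub>R (g - gradf x))"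
    using prox_nonexpansive[OF H a, of "x - \<alpha> *\<^sub>R g" "x - \<alpha> *\<^sub>R gradf x"]
    by (simp add: norm_minus_commute scaleR_diff_right)
  ultimately show ?thesis using a by (simp add: divide_le_eq mult.commute)
qed

lemma borel_measurable_Rtrue:
  fixes h :: "'a::euclidean_space \<Rightarrow> ereal"
  assumes "closed_convex_proper h" and "0 < \<alpha>" and "continuous_on UNIV gradf"
  shows "Rtrue \<alpha> h gradf \<in> borel_measurable borel"
  unfolding Rtrue_def[abs_def]
  by (intro borel_measurable_continuous_onI continuous_intros assms
      continuous_on_compose2[OF continuous_on_prox[OF assms(1,2)]]) auto

text \<open>The starting point x0 need not lie in the domain of h; this bound controls the objective at
  x1 = prox (x0 - \<alpha> g0) by the gradient error at x0.\<close>

lemma prox_objective_quadratic_growth: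
  fixes f :: "'a::euclidean_space \<Rightarrow> real"
  assumes A: "assumptionA f gradf h L" and a: "0 < \<alpha>"
  obtains K where "0 \<le> K" and "\<And>v. f (prox \<alpha> h v) + real_of_ereal (h (prox \<alpha> h v))
    \<le> f (prox \<alpha> h u) + real_of_ereal (h (prox \<alpha> h u)) + K * (1 + (norm (v - u))\<^sup>2)"
proof -
  have H: "closed_convex_proper h" by (rule assumptionA_closed_convex_proper[OF A])
  define q where "q = prox \<alpha> h u"
  define c where "c = norm (u - q)"
  define G where "G = norm (gradf q)"
  show ?thesis
  proof (rule that[of "c / \<alpha> + G + 2 / \<alpha> + L"])
    show "0 \<le> c / \<alpha> + G + 2 / \<alpha> + L"
      using a assumptionA_L_pos[OF A] unfolding c_def G_def by simp
  next
    fix v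
    define p where "p = prox \<alpha> h v"
    define d where "d = norm (v - u)"
    have pq: "norm (q - p) \<le> d"
      unfolding p_def q_def d_def using prox_nonexpansive[OF H a] by (metis norm_minus_commute)
    have "norm (v - p) \<le> norm (v - u) + norm (u - q) + norm (q - p)"
      using norm_triangle_ineq[of "v - u" "u - q"] norm_triangle_ineq[of "(v - u) + (u - q)" "q - p"]
      by simp
    then have "norm (v - p) \<le> 2 * d + c" using pq unfolding d_def c_def by linarith
    then have "- ((v - p) \<bullet> (q - p)) \<le> (2 * d + c) * d"
      using Cauchy_Schwarz_ineq2[of "v - p" "q - p"] pq
      by (smt (verit, best) mult_mono norm_ge_zero)
    moreover have "real_of_ereal (h p) + ((v - p) \<bullet> (q - p)) / \<alpha> \<le> real_of_ereal (h q)"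
      unfolding p_def q_def by (rule prox_variational_ineq[OF H a prox_finite[OF H a]])
    ultimately have hp: "real_of_ereal (h p) \<le> real_of_ereal (h q) + (2 * d + c) * d / \<alpha>"
      using a by (smt (verit, ccfv_SIG) divide_right_mono minus_divide_left)
    have "gradf q \<bullet> (p - q) \<le> G * d"
      using norm_cauchy_schwarz[of "gradf q" "p - q"] pq mult_left_mono[OF pq, of G]
      unfolding G_def by (simp add: norm_minus_commute)
    moreover have "L * (norm (p - q))\<^sup>2 \<le> L * d\<^sup>2"
      using pq assumptionA_L_pos[OF A] by (simp add: norm_minus_commute power_mono)
    ultimately have fp: "f p \<le> f q + G * d + L * d\<^sup>2"
      using assumptionA_descent[OF A, of p q] by linarith
    have "2 * d \<le> 1 + d\<^sup>2"
      using zero_le_power2[of "d - 1"] by (simp add: power2_eq_square algebra_simps)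
    then have "d \<le> 1 + d\<^sup>2" unfolding d_def using norm_ge_zero[of "v - u"] by linarith
    then have "(c / \<alpha> + G) * d \<le> (c / \<alpha> + G) * (1 + d\<^sup>2)"
      using a unfolding c_def G_def by (intro mult_left_mono) auto
    moreover have "(2 / \<alpha> + L) * d\<^sup>2 \<le> (2 / \<alpha> + L) * (1 + d\<^sup>2)"
      using a assumptionA_L_pos[OF A] by (intro mult_left_mono) auto
    moreover have "(2 * d + c) * d / \<alpha> = c / \<alpha> * d + 2 / \<alpha> * d\<^sup>2"
      by (simp add: add_divide_distrib power2_eq_square algebra_simps)
    ultimately have "f p + real_of_ereal (h p)
        \<le> f q + real_of_ereal (h q) + (c / \<alpha> + G + 2 / \<alpha> + L) * (1 + d\<^sup>2)"
      using hp fp by (simp add: algebra_simps)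
    then show "f (prox \<alpha> h v) + real_of_ereal (h (prox \<alpha> h v)) \<le> f (prox \<alpha> h u)
        + real_of_ereal (h (prox \<alpha> h u)) + (c / \<alpha> + G + 2 / \<alpha> + L) * (1 + (norm (v - u))\<^sup>2)"
      unfolding p_def q_def d_def .
  qed
qed

section \<open>Deterministic gradient errors\<close>

lemma sum_le_of_descent:
  fixes p r b :: "nat \<Rightarrow> real"
  assumes descent: "\<And>k. p (Suc k) + \<kappa> * r k \<le> p k + b k"
    and p: "\<And>k. 0 \<le> p k" and \<kappa>: "0 < \<kappa>" and b: "summable b" "\<And>k. 0 \<le> b k"
  shows "(\<Sum>k<n. r k) \<le> (p 0 + suminf b) / \<kappa>"
proof -
  have "p n + \<kappa> * (\<Sum>k<n. r k) \<le> p 0 + (\<Sum>k<n. b k)"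
  proof (induction n)
    case (Suc n)
    then show ?case using descent[of n] by (simp add: algebra_simps)
  qed simp
  moreover have "(\<Sum>k<n. b k) \<le> suminf b" using b by (intro sum_le_suminf) auto
  ultimately show ?thesis using p[of n] \<kappa> by (simp add: pos_le_divide_eq mult.commute)
qed

lemma Min_le_average:
  fixes a :: "nat \<Rightarrow> real"
  assumes "1 \<le> K"
  shows "Min (a ` {..<K}) \<le> (\<Sum>k<K. a k) / real K"
proof -
  have "(\<Sum>k<K. Min (a ` {..<K})) \<le> (\<Sum>k<K. a k)" by (intro sum_mono Min_le) auto
  then show ?thesis using assms by (simp add: pos_le_divide_eq mult.commute)
qed

lemma Min_le_div_of_bounded_tail_sums:
  fixes a :: "nat \<Rightarrow> real"
  assumes "\<And>n. (\<Sum>k<n. a (Suc k)) \<le> B"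
  shows "\<exists>C. \<forall>K\<ge>1. Min (a ` {..<K}) \<le> C / real K"
proof (intro exI allI impI)
  fix K :: nat assume K: "K \<ge> 1"
  then obtain n where n: "K = Suc n" using not0_implies_Suc by fastforce
  have "(\<Sum>k<K. a k) \<le> a 0 + B" using assms[of n] unfolding n sum.lessThan_Suc_shift by simp
  then show "Min (a ` {..<K}) \<le> (a 0 + B) / real K"
    using Min_le_average[OF K, of a] K by (smt (verit) divide_right_mono of_nat_0_le_iff)
qed

lemma sq_add_le: "(a + b)\<^sup>2 \<le> 2 * a\<^sup>2 + 2 * (b::real)\<^sup>2"
  using zero_le_power2[of "a - b"] by (simp add: power2_eq_square algebra_simps)

lemma norm_sq_le_of_dist_le:
  fixes u v :: "'a::real_normed_vector"
  assumes "norm (u - v) \<le> w"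
  shows "(norm u)\<^sup>2 \<le> 2 * (norm v)\<^sup>2 + 2 * w\<^sup>2"
proof -
  have "norm u \<le> norm v + w" using assms norm_triangle_ineq2[of u v] by linarith
  then have "(norm u)\<^sup>2 \<le> (norm v + w)\<^sup>2" by (intro power_mono) auto
  also have "\<dots> \<le> 2 * (norm v)\<^sup>2 + 2 * w\<^sup>2" by (rule sq_add_le)
  finally show ?thesis .
qed

lemma norm_sq_le_of_relative_dist_le:
  fixes u v :: "'a::real_normed_vector"
  assumes "norm (u - v) \<le> \<eta> / 2 * norm v + \<epsilon>" and "\<eta> \<le> 2"
  shows "(norm u)\<^sup>2 \<le> 8 * (norm v)\<^sup>2 + 2 * \<epsilon>\<^sup>2"
proof -
  have "\<eta> / 2 * norm v \<le> norm v" using assms(2) mult_right_mono[of "\<eta> / 2" 1 "norm v"] by simp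
  then have "norm u \<le> 2 * norm v + \<epsilon>" using assms(1) norm_triangle_ineq2[of u v] by linarith
  then have "(norm u)\<^sup>2 \<le> (2 * norm v + \<epsilon>)\<^sup>2" by (intro power_mono) auto
  also have "\<dots> \<le> 2 * (2 * norm v)\<^sup>2 + 2 * \<epsilon>\<^sup>2" by (rule sq_add_le)
  finally show ?thesis by (simp add: power_mult_distrib)
qed

text \<open>Only the iterates from x1 on lie in the domain of h, so the Lyapunov function is the
  objective gap at x (k + 1).\<close>

theorem prox_grad_rate_deterministic:
  fixes f :: "'a::euclidean_space \<Rightarrow> real" and x g :: "nat \<Rightarrow> 'a"
  assumes A: "assumptionA f gradf h L"
    and x_Suc: "\<And>k. x (Suc k) = prox \<alpha> h (x k - \<alpha> *\<^sub>R g k)"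
    and a: "0 < \<alpha>" and step: "\<alpha> \<le> (1 - \<eta>) / (2 * L)"
    and err: "\<And>k. norm (g k - gradf (x k)) \<le> \<eta> / 2 * norm ((1 / \<alpha>) *\<^sub>R (x k - x (Suc k))) + \<iota> * \<delta> k"
    and summable: "summable (\<lambda>k. (\<delta> k)\<^sup>2)"
  shows "\<exists>C. \<forall>K\<ge>1. Min ((\<lambda>k. (norm (Rtrue \<alpha> h gradf (x k)))\<^sup>2) ` {..<K}) \<le> C / real K"
proof -
  have H: "closed_convex_proper h" by (rule assumptionA_closed_convex_proper[OF A])
  have \<eta>: "\<eta> < 1" using a step assumptionA_L_pos[OF A] by (smt (verit) divide_nonpos_pos)
  define R where "R k = (1 / \<alpha>) *\<^sub>R (x k - x (Suc k))" for k
  define gap where "gap k = f (x (Suc k)) + real_of_ereal (h (x (Suc k))) - phi_star f h" for k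
  have dom: "h (x (Suc k)) \<noteq> \<infinity>" for k unfolding x_Suc by (rule prox_finite[OF H a])
  have summable_err: "summable (\<lambda>k. (\<iota> * \<delta> (Suc k))\<^sup>2)"
    using summable_mult[OF summable_Suc_iff[THEN iffD2, OF summable], of "\<iota>\<^sup>2"]
    by (simp add: power_mult_distrib)
  have descent: "gap (Suc k) + \<alpha> / 4 * (norm (R (Suc k)))\<^sup>2 \<le> gap k + \<alpha> * (\<iota> * \<delta> (Suc k))\<^sup>2"
    for k
    using prox_grad_step_decrease[OF A a dom step err[of "Suc k", unfolded x_Suc[of "Suc k"]]]
    unfolding gap_def R_def x_Suc[of "Suc k"] by linarith
  define B where "B = (gap 0 + (\<Sum>k. \<alpha> * (\<iota> * \<delta> (Suc k))\<^sup>2)) / (\<alpha> / 4)"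
  have R_sum: "(\<Sum>k<n. (norm (R (Suc k)))\<^sup>2) \<le> B" for n
    unfolding B_def
    by (rule sum_le_of_descent[OF descent _ _ summable_mult[OF summable_err]])
      (use a phi_star_le[OF A dom] in \<open>auto simp: gap_def\<close>)
  have "norm (Rtrue \<alpha> h gradf (x k) - R k) \<le> \<eta> / 2 * norm (R k) + \<iota> * \<delta> k" for k
    using norm_Rtrue_diff_le[OF H a, of gradf "x k" "g k"] err[of k]
    unfolding R_def x_Suc by linarith
  then have Rtrue_le: "(norm (Rtrue \<alpha> h gradf (x k)))\<^sup>2 \<le> 8 * (norm (R k))\<^sup>2 + 2 * (\<iota> * \<delta> k)\<^sup>2"
    for k using \<eta> by (intro norm_sq_le_of_relative_dist_le) auto
  have "(\<Sum>k<n. (norm (Rtrue \<alpha> h gradf (x (Suc k))))\<^sup>2)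
      \<le> 8 * B + 2 * (\<Sum>k. (\<iota> * \<delta> (Suc k))\<^sup>2)"
    for n
  proof -
    have "(\<Sum>k<n. (norm (Rtrue \<alpha> h gradf (x (Suc k))))\<^sup>2)
        \<le> 8 * (\<Sum>k<n. (norm (R (Suc k)))\<^sup>2) + 2 * (\<Sum>k<n. (\<iota> * \<delta> (Suc k))\<^sup>2)"
      using sum_mono[of "{..<n}" "\<lambda>k. (norm (Rtrue \<alpha> h gradf (x (Suc k))))\<^sup>2"
          "\<lambda>k. 8 * (norm (R (Suc k)))\<^sup>2 + 2 * (\<iota> * \<delta> (Suc k))\<^sup>2"] Rtrue_le
      by (simp add: sum.distrib sum_distrib_left)
    then show ?thesis
      using R_sum[of n] sum_le_suminf[OF summable_err, of "{..<n}"] by simp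
  qed
  then show ?thesis by (rule Min_le_div_of_bounded_tail_sums)
qed

section \<open>Conditional expectations\<close>

context sigma_finite_subalgebra
begin

lemma nn_integral_nn_cond_exp:
  assumes "g \<in> borel_measurable M"
  shows "(\<integral>\<^sup>+\<omega>. nn_cond_exp M F g \<omega> \<partial>M) = (\<integral>\<^sup>+\<omega>. g \<omega> \<partial>M)"
  using nn_cond_exp_intg[of "\<lambda>_. 1" g] assms by simp

lemma nn_cond_exp_sum_finite:
  assumes "finite I" and "\<And>i. i \<in> I \<Longrightarrow> f i \<in> borel_measurable M"
  shows "AE \<omega> in M. (\<Sum>i\<in>I. nn_cond_exp M F (f i) \<omega>) = nn_cond_exp M F (\<lambda>\<omega>. \<Sum>i\<in>I. f i \<omega>) \<omega>"
  using assms
proof (induction I rule: finite_induct)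
  case empty
  show ?case using nn_cond_exp_F_meas[of "\<lambda>_. 0"] by simp
next
  case (insert j I)
  have "AE \<omega> in M. (\<Sum>i\<in>I. nn_cond_exp M F (f i) \<omega>) = nn_cond_exp M F (\<lambda>\<omega>. \<Sum>i\<in>I. f i \<omega>) \<omega>"
    using insert.prems by (intro insert.IH) auto
  moreover have "AE \<omega> in M. nn_cond_exp M F (f j) \<omega> + nn_cond_exp M F (\<lambda>\<omega>. \<Sum>i\<in>I. f i \<omega>) \<omega>
      = nn_cond_exp M F (\<lambda>\<omega>. f j \<omega> + (\<Sum>i\<in>I. f i \<omega>)) \<omega>"
    using insert.prems by (intro nn_cond_exp_sum) auto
  ultimately show ?case by eventually_elim (simp add: insert.hyps)
qed

text \<open>Conditional Jensen for the square via the tangent inequality 2 c X - c^2 \<le> X^2 with bounded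
  F-measurable c; unlike the library version this needs only X, not its square, to be integrable.\<close>

lemma real_cond_exp_tangent_le:
  assumes prob: "prob_space M" and X: "integrable M X"
    and c[measurable]: "c \<in> borel_measurable F" and bounded: "\<And>\<omega>. \<bar>c \<omega>\<bar> \<le> B"
  shows "AE \<omega> in M. ennreal (2 * c \<omega> * real_cond_exp M F X \<omega> - (c \<omega>)\<^sup>2)
           \<le> nn_cond_exp M F (\<lambda>\<omega>. ennreal ((X \<omega>)\<^sup>2)) \<omega>"
proof -
  interpret prob_space M by (rule prob)
  have [measurable]: "X \<in> borel_measurable M" using X by auto
  have [measurable]: "c \<in> borel_measurable M" by (rule measurable_from_subalg[OF subalg c])
  define Z where "Z \<omega> = 2 * c \<omega> * X \<omega> - (c \<omega>)\<^sup>2" for \<omega>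
  have int_cX: "integrable M (\<lambda>\<omega>. 2 * c \<omega> * X \<omega>)"
    using bounded by (intro Bochner_Integration.integrable_bound[OF integrable_mult_right[OF X, of "2 * B"]])
      (auto simp: abs_mult intro!: mult_right_mono order_trans[OF bounded abs_ge_self])
  have int_c2: "integrable M (\<lambda>\<omega>. (c \<omega>)\<^sup>2)"
    using bounded by (intro integrable_const_bound[where B = "B\<^sup>2"])
      (auto simp: abs_le_square_iff[symmetric] intro: order_trans[OF _ abs_ge_self])
  have "AE \<omega> in M. real_cond_exp M F (\<lambda>\<omega>. 2 * c \<omega> * X \<omega>) \<omega> = 2 * c \<omega> * real_cond_exp M F X \<omega>"
    by (rule real_cond_exp_mult) (use int_cX in auto)
  moreover have "AE \<omega> in M. real_cond_exp M F (\<lambda>\<omega>. (c \<omega>)\<^sup>2) \<omega> = (c \<omega>)\<^sup>2"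
    by (rule real_cond_exp_F_meas[OF int_c2]) simp
  ultimately have "AE \<omega> in M. real_cond_exp M F Z \<omega> = 2 * c \<omega> * real_cond_exp M F X \<omega> - (c \<omega>)\<^sup>2"
    using real_cond_exp_diff[OF int_cX int_c2] unfolding Z_def by eventually_elim simp
  moreover have "AE \<omega> in M. nn_cond_exp M F (\<lambda>\<omega>. ennreal (Z \<omega>)) \<omega>
      \<le> nn_cond_exp M F (\<lambda>\<omega>. ennreal ((X \<omega>)\<^sup>2)) \<omega>"
    using zero_le_power2[of "X _ - c _"]
    by (intro nn_cond_exp_mono AE_I2 ennreal_leI)
      (auto simp: Z_def power2_eq_square algebra_simps)
  ultimately show ?thesis
  proof eventually_elim
    case (elim \<omega>)
    have "real_cond_exp M F Z \<omega> \<le> enn2real (nn_cond_exp M F (\<lambda>\<omega>. ennreal (Z \<omega>)) \<omega>)"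
      unfolding real_cond_exp_def by simp
    then have "ennreal (real_cond_exp M F Z \<omega>) \<le> nn_cond_exp M F (\<lambda>\<omega>. ennreal (Z \<omega>)) \<omega>"
      by (metis ennreal_enn2real_if ennreal_leI order_trans top_greatest)
    with elim show ?case by simp
  qed
qed

lemma real_cond_exp_sq_le:
  assumes prob: "prob_space M" and X: "integrable M X"
  shows "AE \<omega> in M. ennreal ((real_cond_exp M F X \<omega>)\<^sup>2) \<le> nn_cond_exp M F (\<lambda>\<omega>. ennreal ((X \<omega>)\<^sup>2)) \<omega>"
proof -
  define Y where "Y = real_cond_exp M F X"
  define c where "c n \<omega> = max (- real n) (min (real n) (Y \<omega>))" for n \<omega>
  have "AE \<omega> in M. ennreal (2 * c n \<omega> * Y \<omega> - (c n \<omega>)\<^sup>2)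
      \<le> nn_cond_exp M F (\<lambda>\<omega>. ennreal ((X \<omega>)\<^sup>2)) \<omega>" for n
    unfolding Y_def by (rule real_cond_exp_tangent_le[OF prob X, of _ "real n"])
      (auto simp: c_def Y_def)
  then have "AE \<omega> in M. \<forall>n. ennreal (2 * c n \<omega> * Y \<omega> - (c n \<omega>)\<^sup>2)
      \<le> nn_cond_exp M F (\<lambda>\<omega>. ennreal ((X \<omega>)\<^sup>2)) \<omega>"
    by (simp add: AE_all_countable)
  then show ?thesis
  proof eventually_elim
    case (elim \<omega>)
    have "c (nat \<lceil>\<bar>Y \<omega>\<bar>\<rceil>) \<omega> = Y \<omega>" unfolding c_def by linarith
    then show ?case using elim[rule_format, of "nat \<lceil>\<bar>Y \<omega>\<bar>\<rceil>"]
      by (simp add: Y_def power2_eq_square)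
  qed
qed

lemma vec_cond_exp_norm_sq_le:
  fixes X :: "'a \<Rightarrow> 'b::euclidean_space"
  assumes prob: "prob_space M" and X: "integrable M X"
  shows "AE \<omega> in M. ennreal ((norm (vec_cond_exp M F X \<omega>))\<^sup>2)
           \<le> nn_cond_exp M F (\<lambda>\<omega>. ennreal ((norm (X \<omega>))\<^sup>2)) \<omega>"
proof -
  have [measurable]: "X \<in> borel_measurable M" using X by auto
  have norm_sq: "(norm v)\<^sup>2 = (\<Sum>b\<in>Basis. (v \<bullet> b)\<^sup>2)" for v :: 'b
    unfolding power2_norm_eq_inner by (subst euclidean_inner) (simp add: power2_eq_square)
  have "AE \<omega> in M. \<forall>b\<in>Basis. ennreal ((real_cond_exp M F (\<lambda>\<omega>. X \<omega> \<bullet> b) \<omega>)\<^sup>2)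
      \<le> nn_cond_exp M F (\<lambda>\<omega>. ennreal ((X \<omega> \<bullet> b)\<^sup>2)) \<omega>"
    by (intro AE_finite_allI finite_Basis real_cond_exp_sq_le[OF prob] integrable_inner_left X)
  moreover have "AE \<omega> in M. (\<Sum>b\<in>Basis. nn_cond_exp M F (\<lambda>\<omega>. ennreal ((X \<omega> \<bullet> b)\<^sup>2)) \<omega>)
      = nn_cond_exp M F (\<lambda>\<omega>. \<Sum>b\<in>Basis. ennreal ((X \<omega> \<bullet> b)\<^sup>2)) \<omega>"
    by (rule nn_cond_exp_sum_finite) auto
  ultimately show ?thesis
  proof eventually_elim
    case (elim \<omega>)
    have "vec_cond_exp M F X \<omega> \<bullet> b = real_cond_exp M F (\<lambda>\<omega>. X \<omega> \<bullet> b) \<omega>" if "b \<in> Basis" for b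
      unfolding vec_cond_exp_def using that by (rule inner_sum_left_Basis)
    then have "ennreal ((norm (vec_cond_exp M F X \<omega>))\<^sup>2)
        = (\<Sum>b\<in>Basis. ennreal ((real_cond_exp M F (\<lambda>\<omega>. X \<omega> \<bullet> b) \<omega>)\<^sup>2))"
      by (simp add: norm_sq sum_ennreal)
    also have "\<dots> \<le> (\<Sum>b\<in>Basis. nn_cond_exp M F (\<lambda>\<omega>. ennreal ((X \<omega> \<bullet> b)\<^sup>2)) \<omega>)"
      using elim(1) by (intro sum_mono) auto
    finally show ?case using elim(2) by (simp add: norm_sq sum_ennreal)
  qed
qed

end

lemma sigma_finite_subalgebra_gen_sigma:
  assumes "prob_space M" and g: "\<And>k. g k \<in> borel_measurable M"
  shows "sigma_finite_subalgebra M (gen_sigma M g k)"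
proof (rule finite_measure_subalgebra_is_sigma_finite)
  define G where "G = {g j -` A \<inter> space M | j A. j < k \<and> A \<in> sets borel}"
  have GM: "G \<subseteq> sets M" unfolding G_def using g by (auto intro: measurable_sets)
  then have G: "G \<subseteq> Pow (space M)" using sets.sets_into_space by blast
  have "subalgebra M (sigma (space M) G)"
    unfolding subalgebra_def sets_measure_of[OF G] space_measure_of[OF G]
    using sets.sigma_sets_subset[OF GM] by simp
  then show "finite_measure_subalgebra M (gen_sigma M g k)"
    using assms(1) unfolding gen_sigma_def G_def[symmetric] finite_measure_subalgebra_def
      finite_measure_subalgebra_axioms_def prob_space_def by simp
qed

lemma ennreal_le_absorb:
  fixes n a :: ennreal
  assumes le: "n \<le> ennreal q * (2 * a + 2 * n) + ennreal c"
    and q: "0 \<le> q" "q \<le> 1 / 4" and c: "0 \<le> c" and n: "n < \<infinity>"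
  shows "n \<le> a + ennreal (2 * c)"
proof (cases a rule: ennreal_cases)
  case (real a')
  obtain n' where n': "0 \<le> n'" "n = ennreal n'" using n by (cases n rule: ennreal_cases) auto
  have "ennreal n' \<le> ennreal (q * (2 * a' + 2 * n') + c)"
    using le real n' q c by (simp add: ennreal_mult)
  moreover have "0 \<le> q * (2 * a' + 2 * n') + c" using q c real n' by simp
  ultimately have "n' \<le> q * (2 * a' + 2 * n') + c" using ennreal_le_iff by blast
  moreover have "q * (2 * a' + 2 * n') \<le> 1 / 4 * (2 * a' + 2 * n')"
    using q real n' by (intro mult_right_mono) auto
  ultimately have "n' \<le> a' / 2 + n' / 2 + c" by simp
  then have "n' \<le> a' + 2 * c" by linarith
  then show ?thesis using real n' c by (simp add: ennreal_leI flip: ennreal_plus)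
qed simp

lemma (in sigma_finite_subalgebra) nn_cond_exp_norm_sq_le:
  fixes u v w :: "'a \<Rightarrow> 'b::euclidean_space"
  assumes [measurable]: "u \<in> borel_measurable M" "v \<in> borel_measurable M" "w \<in> borel_measurable M"
    and dist: "\<And>\<omega>. \<omega> \<in> space M \<Longrightarrow> norm (u \<omega> - v \<omega>) \<le> norm (w \<omega>)"
  shows "AE \<omega> in M. nn_cond_exp M F (\<lambda>\<omega>. ennreal ((norm (u \<omega>))\<^sup>2)) \<omega>
    \<le> 2 * nn_cond_exp M F (\<lambda>\<omega>. ennreal ((norm (v \<omega>))\<^sup>2)) \<omega>
      + 2 * nn_cond_exp M F (\<lambda>\<omega>. ennreal ((norm (w \<omega>))\<^sup>2)) \<omega>"
proof -
  have "AE \<omega> in M. nn_cond_exp M F (\<lambda>\<omega>. ennreal ((norm (u \<omega>))\<^sup>2)) \<omega> \<le> nn_cond_exp M F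
      (\<lambda>\<omega>. 2 * ennreal ((norm (v \<omega>))\<^sup>2) + 2 * ennreal ((norm (w \<omega>))\<^sup>2)) \<omega>"
  proof (intro nn_cond_exp_mono AE_I2)
    fix \<omega> assume "\<omega> \<in> space M"
    then have "ennreal ((norm (u \<omega>))\<^sup>2) \<le> ennreal (2 * (norm (v \<omega>))\<^sup>2 + 2 * (norm (w \<omega>))\<^sup>2)"
      by (intro ennreal_leI norm_sq_le_of_dist_le dist)
    then show "ennreal ((norm (u \<omega>))\<^sup>2) \<le> 2 * ennreal ((norm (v \<omega>))\<^sup>2) + 2 * ennreal ((norm (w \<omega>))\<^sup>2)"
      by (simp add: ennreal_mult)
  qed measurable
  moreover have "AE \<omega> in M. nn_cond_exp M F (\<lambda>\<omega>. 2 * ennreal ((norm (v \<omega>))\<^sup>2)) \<omega>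
        + nn_cond_exp M F (\<lambda>\<omega>. 2 * ennreal ((norm (w \<omega>))\<^sup>2)) \<omega>
      = nn_cond_exp M F (\<lambda>\<omega>. 2 * ennreal ((norm (v \<omega>))\<^sup>2) + 2 * ennreal ((norm (w \<omega>))\<^sup>2)) \<omega>"
    by (rule nn_cond_exp_sum) measurable
  moreover have "AE \<omega> in M. (\<lambda>_. 2) \<omega> * nn_cond_exp M F (\<lambda>\<omega>. ennreal ((norm (v \<omega>))\<^sup>2)) \<omega>
      = nn_cond_exp M F (\<lambda>\<omega>. (\<lambda>_. 2) \<omega> * ennreal ((norm (v \<omega>))\<^sup>2)) \<omega>"
    "AE \<omega> in M. (\<lambda>_. 2) \<omega> * nn_cond_exp M F (\<lambda>\<omega>. ennreal ((norm (w \<omega>))\<^sup>2)) \<omega>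
      = nn_cond_exp M F (\<lambda>\<omega>. (\<lambda>_. 2) \<omega> * ennreal ((norm (w \<omega>))\<^sup>2)) \<omega>"
    by (rule nn_cond_exp_prod; measurable)+
  ultimately show ?thesis by eventually_elim simp
qed

lemma (in sigma_finite_subalgebra) nn_cond_exp_error_le:
  fixes R e :: "'a \<Rightarrow> 'b::euclidean_space"
  assumes prob: "prob_space M" and R: "integrable M R"
    and cond: "AE \<omega> in M. nn_cond_exp M F (\<lambda>\<omega>. ennreal ((norm (e \<omega>))\<^sup>2)) \<omega>
                  \<le> ennreal (\<eta>\<^sup>2 / 4 * (norm (vec_cond_exp M F R \<omega>))\<^sup>2 + c)"
    and c: "0 \<le> c"
  shows "AE \<omega> in M. nn_cond_exp M F (\<lambda>\<omega>. ennreal ((norm (e \<omega>))\<^sup>2)) \<omega>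
    \<le> ennreal (\<eta>\<^sup>2 / 4) * nn_cond_exp M F (\<lambda>\<omega>. ennreal ((norm (R \<omega>))\<^sup>2)) \<omega> + ennreal c"
  using cond vec_cond_exp_norm_sq_le[OF prob R]
proof eventually_elim
  case (elim \<omega>)
  define v where "v = (norm (vec_cond_exp M F R \<omega>))\<^sup>2"
  have "ennreal (\<eta>\<^sup>2 / 4 * v) = ennreal (\<eta>\<^sup>2 / 4) * ennreal v"
    unfolding v_def by (intro ennreal_mult) auto
  then have "ennreal (\<eta>\<^sup>2 / 4 * v + c) = ennreal (\<eta>\<^sup>2 / 4) * ennreal v + ennreal c"
    using c unfolding v_def by simp
  also have "\<dots> \<le> ennreal (\<eta>\<^sup>2 / 4) * nn_cond_exp M F (\<lambda>\<omega>. ennreal ((norm (R \<omega>))\<^sup>2)) \<omega> + ennreal c"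
    using elim(2) unfolding v_def by (intro add_right_mono mult_left_mono) auto
  finally show ?case using elim(1) unfolding v_def by simp
qed

text \<open>For the second bound, let N, J, A be the conditional second moments of e, R, T. Then
  N \<le> \<eta>^2/4 J + c and J \<le> 2 A + 2 N; as N is a.e. finite and \<eta>^2 \<le> 1, this gives
  N \<le> A + 2 c.\<close>

lemma (in sigma_finite_subalgebra) expected_error_bounds:
  fixes R T e :: "'a \<Rightarrow> 'b::euclidean_space"
  assumes prob: "prob_space M" and R: "integrable M R"
    and [measurable]: "T \<in> borel_measurable M" "e \<in> borel_measurable M"
    and close: "\<And>\<omega>. \<omega> \<in> space M \<Longrightarrow> norm (T \<omega> - R \<omega>) \<le> norm (e \<omega>)"
    and cond: "AE \<omega> in M. nn_cond_exp M F (\<lambda>\<omega>. ennreal ((norm (e \<omega>))\<^sup>2)) \<omega>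
                  \<le> ennreal (\<eta>\<^sup>2 / 4 * (norm (vec_cond_exp M F R \<omega>))\<^sup>2 + c)"
    and \<eta>: "\<eta>\<^sup>2 \<le> 1" and c: "0 \<le> c"
  shows "(\<integral>\<^sup>+\<omega>. ennreal ((norm (e \<omega>))\<^sup>2) \<partial>M)
           \<le> ennreal (\<eta>\<^sup>2 / 4) * (\<integral>\<^sup>+\<omega>. ennreal ((norm (R \<omega>))\<^sup>2) \<partial>M) + ennreal c"
    and "(\<integral>\<^sup>+\<omega>. ennreal ((norm (e \<omega>))\<^sup>2) \<partial>M)
           \<le> (\<integral>\<^sup>+\<omega>. ennreal ((norm (T \<omega>))\<^sup>2) \<partial>M) + ennreal (2 * c)"
proof -
  interpret prob_space M by (rule prob)
  have [measurable]: "R \<in> borel_measurable M" using R by auto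
  define N where "N = nn_cond_exp M F (\<lambda>\<omega>. ennreal ((norm (e \<omega>))\<^sup>2))"
  define J where "J = nn_cond_exp M F (\<lambda>\<omega>. ennreal ((norm (R \<omega>))\<^sup>2))"
  define A where "A = nn_cond_exp M F (\<lambda>\<omega>. ennreal ((norm (T \<omega>))\<^sup>2))"
  have integrals: "(\<integral>\<^sup>+\<omega>. N \<omega> \<partial>M) = (\<integral>\<^sup>+\<omega>. ennreal ((norm (e \<omega>))\<^sup>2) \<partial>M)"
    "(\<integral>\<^sup>+\<omega>. J \<omega> \<partial>M) = (\<integral>\<^sup>+\<omega>. ennreal ((norm (R \<omega>))\<^sup>2) \<partial>M)"
    "(\<integral>\<^sup>+\<omega>. A \<omega> \<partial>M) = (\<integral>\<^sup>+\<omega>. ennreal ((norm (T \<omega>))\<^sup>2) \<partial>M)"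
    unfolding N_def J_def A_def by (simp_all add: nn_integral_nn_cond_exp)
  have N_J: "AE \<omega> in M. N \<omega> \<le> ennreal (\<eta>\<^sup>2 / 4) * J \<omega> + ennreal c"
    unfolding N_def J_def by (rule nn_cond_exp_error_le[OF prob R cond c])
  then have "(\<integral>\<^sup>+\<omega>. N \<omega> \<partial>M) \<le> (\<integral>\<^sup>+\<omega>. ennreal (\<eta>\<^sup>2 / 4) * J \<omega> + ennreal c \<partial>M)"
    by (rule nn_integral_mono_AE)
  then show "(\<integral>\<^sup>+\<omega>. ennreal ((norm (e \<omega>))\<^sup>2) \<partial>M)
      \<le> ennreal (\<eta>\<^sup>2 / 4) * (\<integral>\<^sup>+\<omega>. ennreal ((norm (R \<omega>))\<^sup>2) \<partial>M) + ennreal c"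
    unfolding J_def integrals[symmetric]
    by (simp add: nn_integral_add nn_integral_cmult emeasure_space_1)
  have "AE \<omega> in M. J \<omega> \<le> 2 * A \<omega> + 2 * N \<omega>"
    unfolding J_def A_def N_def
    by (rule nn_cond_exp_norm_sq_le) (use close in \<open>auto simp: norm_minus_commute\<close>)
  then have "AE \<omega> in M. N \<omega> \<le> A \<omega> + ennreal (2 * c)"
    using N_J cond unfolding N_def[symmetric]
  proof eventually_elim
    case (elim \<omega>)
    then have "N \<omega> \<le> ennreal (\<eta>\<^sup>2 / 4) * (2 * A \<omega> + 2 * N \<omega>) + ennreal c"
      by (meson add_right_mono mult_left_mono order_trans zero_le)
    moreover have "N \<omega> < \<infinity>" using elim(3) by (simp add: le_less_trans)
    ultimately show ?case using \<eta> c by (intro ennreal_le_absorb[of _ "\<eta>\<^sup>2 / 4"]) auto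
  qed
  then have "(\<integral>\<^sup>+\<omega>. N \<omega> \<partial>M) \<le> (\<integral>\<^sup>+\<omega>. A \<omega> + ennreal (2 * c) \<partial>M)"
    by (rule nn_integral_mono_AE)
  then show "(\<integral>\<^sup>+\<omega>. ennreal ((norm (e \<omega>))\<^sup>2) \<partial>M)
      \<le> (\<integral>\<^sup>+\<omega>. ennreal ((norm (T \<omega>))\<^sup>2) \<partial>M) + ennreal (2 * c)"
    unfolding A_def integrals[symmetric] by (simp add: nn_integral_add emeasure_space_1)
qed

section \<open>Random gradient errors\<close>

text \<open>The expected quantities may a priori be infinite, since nothing is assumed about second
  moments. Finiteness propagates along the recursion (gap bounds true residual, which bounds the
  error, which bounds the next gap), after which the argument of the deterministic case applies.\<close>

lemma ennreal_descent_finite: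
  fixes P E T :: "nat \<Rightarrow> ennreal"
  assumes descent: "\<And>k. P (Suc k) \<le> P k + ennreal a * E k"
    and E_T: "\<And>k. E k \<le> T k + ennreal (b k)" and T_P: "\<And>k. T k \<le> ennreal \<beta> * P k"
    and P0: "P 0 < \<infinity>"
  shows "P k < \<infinity> \<and> T k < \<infinity> \<and> E k < \<infinity>"
proof (induction k)
  case 0
  then show ?case using P0 T_P[of 0] E_T[of 0] by (simp add: ennreal_mult_less_top le_less_trans)
next
  case (Suc k)
  then have "P (Suc k) < \<infinity>"
    using descent[of k] by (simp add: ennreal_mult_less_top le_less_trans)
  then show ?case
    using T_P[of "Suc k"] E_T[of "Suc k"] by (simp add: ennreal_mult_less_top le_less_trans)
qed

lemma descent_bounded_sums:
  fixes p r e t c :: "nat \<Rightarrow> real"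
  assumes descent: "\<And>k. p (Suc k) + \<alpha> / 4 * r k \<le> p k + \<alpha> * e k"
    and e_r: "\<And>k. e k \<le> \<eta>\<^sup>2 / 4 * r k + c k" and t_re: "\<And>k. t k \<le> 2 * r k + 2 * e k"
    and p: "\<And>k. 0 \<le> p k" and r: "\<And>k. 0 \<le> r k"
    and \<alpha>: "0 < \<alpha>" and \<eta>: "\<eta>\<^sup>2 < 1" and c: "\<And>k. 0 \<le> c k" "summable c"
  shows "\<exists>B. \<forall>n. (\<Sum>k<n. t k) \<le> B"
proof -
  define \<kappa> where "\<kappa> = \<alpha> * (1 - \<eta>\<^sup>2) / 4"
  have kappa_descent: "p (Suc k) + \<kappa> * r k \<le> p k + \<alpha> * c k" for k
  proof -
    have "\<alpha> * e k \<le> \<alpha> * (\<eta>\<^sup>2 / 4 * r k) + \<alpha> * c k"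
      using mult_left_mono[OF e_r[of k], of \<alpha>] \<alpha> by (simp add: distrib_left)
    moreover have "\<kappa> * r k = \<alpha> / 4 * r k - \<alpha> * (\<eta>\<^sup>2 / 4 * r k)"
      unfolding \<kappa>_def by (simp add: field_simps)
    ultimately show ?thesis using descent[of k] by linarith
  qed
  define B where "B = (p 0 + (\<Sum>k. \<alpha> * c k)) / \<kappa>"
  have r_sum: "(\<Sum>k<n. r k) \<le> B" for n
    unfolding B_def by (rule sum_le_of_descent[OF kappa_descent _ _ summable_mult[OF c(2)]])
      (use \<alpha> \<eta> c p in \<open>auto simp: \<kappa>_def\<close>)
  have t_le: "t k \<le> 3 * r k + 2 * c k" for k
  proof -
    have "\<eta>\<^sup>2 * r k \<le> r k" using \<eta> r mult_right_mono[of "\<eta>\<^sup>2" 1 "r k"] by simp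
    then show ?thesis using t_re[of k] e_r[of k] r[of k] by linarith
  qed
  have "(\<Sum>k<n. t k) \<le> 3 * B + 2 * (\<Sum>k. c k)" for n
  proof -
    have "(\<Sum>k<n. t k) \<le> 3 * (\<Sum>k<n. r k) + 2 * (\<Sum>k<n. c k)"
      using sum_mono[of "{..<n}" t "\<lambda>k. 3 * r k + 2 * c k"] t_le
      by (simp add: sum.distrib sum_distrib_left)
    then show ?thesis using r_sum[of n] sum_le_suminf[OF c(2), of "{..<n}"] c(1) by simp
  qed
  then show ?thesis by blast
qed

lemma ennreal_descent_bounded_sums:
  fixes P R E T :: "nat \<Rightarrow> ennreal" and c :: "nat \<Rightarrow> real"
  assumes descent: "\<And>k. P (Suc k) + ennreal (\<alpha> / 4) * R k \<le> P k + ennreal \<alpha> * E k"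
    and E_R: "\<And>k. E k \<le> ennreal (\<eta>\<^sup>2 / 4) * R k + ennreal (c k)"
    and E_T: "\<And>k. E k \<le> T k + ennreal (2 * c k)"
    and T_P: "\<And>k. T k \<le> ennreal (4 / \<alpha>) * P k"
    and R_TE: "\<And>k. R k \<le> 2 * T k + 2 * E k"
    and T_RE: "\<And>k. T k \<le> 2 * R k + 2 * E k"
    and P0: "P 0 < \<infinity>" and \<alpha>: "0 < \<alpha>" and \<eta>: "\<eta>\<^sup>2 < 1"
    and c: "\<And>k. 0 \<le> c k" "summable c"
  shows "(\<forall>k. T k < \<infinity>) \<and> (\<exists>B. \<forall>n. (\<Sum>k<n. enn2real (T k)) \<le> B)"
proof -
  have "P (Suc k) \<le> P k + ennreal \<alpha> * E k" for k by (rule order_trans[OF _ descent]) simp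
  with ennreal_descent_finite[where P = P and E = E and T = T, OF _ E_T T_P P0]
  have finite_P: "P k < \<infinity>" and finite_T: "T k < \<infinity>" and finite_E: "E k < \<infinity>" for k
    by auto
  have finite_R: "R k < \<infinity>" for k
    using R_TE[of k] finite_T[of k] finite_E[of k] by (simp add: ennreal_mult_less_top le_less_trans)
  define p where "p k = enn2real (P k)" for k
  define r where "r k = enn2real (R k)" for k
  define e where "e k = enn2real (E k)" for k
  define t where "t k = enn2real (T k)" for k
  have real_descent: "p (Suc k) + \<alpha> / 4 * r k \<le> p k + \<alpha> * e k" for k
    using enn2real_mono[OF descent[of k]] finite_P finite_R finite_E \<alpha>
    unfolding p_def r_def e_def by (simp add: enn2real_plus ennreal_mult_less_top enn2real_mult)
  have real_E_R: "e k \<le> \<eta>\<^sup>2 / 4 * r k + c k" for k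
    using enn2real_mono[OF E_R[of k]] finite_R c
    unfolding r_def e_def by (simp add: enn2real_plus ennreal_mult_less_top enn2real_mult)
  have real_T_RE: "t k \<le> 2 * r k + 2 * e k" for k
    using enn2real_mono[OF T_RE[of k]] finite_R finite_E
    unfolding r_def e_def t_def by (simp add: enn2real_plus ennreal_mult_less_top enn2real_mult)
  have "\<exists>B. \<forall>n. (\<Sum>k<n. t k) \<le> B"
    by (rule descent_bounded_sums[OF real_descent real_E_R real_T_RE _ _ \<alpha> \<eta> c])
      (simp_all add: p_def r_def)
  then show ?thesis using finite_T unfolding t_def by blast
qed

lemma nn_integral_norm_sq_le:
  fixes u v w :: "'w \<Rightarrow> 'b::euclidean_space"
  assumes [measurable]: "v \<in> borel_measurable M" "w \<in> borel_measurable M"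
    and dist: "\<And>\<omega>. \<omega> \<in> space M \<Longrightarrow> norm (u \<omega> - v \<omega>) \<le> norm (w \<omega>)"
  shows "(\<integral>\<^sup>+\<omega>. ennreal ((norm (u \<omega>))\<^sup>2) \<partial>M)
    \<le> 2 * (\<integral>\<^sup>+\<omega>. ennreal ((norm (v \<omega>))\<^sup>2) \<partial>M) + 2 * (\<integral>\<^sup>+\<omega>. ennreal ((norm (w \<omega>))\<^sup>2) \<partial>M)"
proof -
  have "(\<integral>\<^sup>+\<omega>. ennreal ((norm (u \<omega>))\<^sup>2) \<partial>M)
      \<le> (\<integral>\<^sup>+\<omega>. 2 * ennreal ((norm (v \<omega>))\<^sup>2) + 2 * ennreal ((norm (w \<omega>))\<^sup>2) \<partial>M)"
  proof (rule nn_integral_mono)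
    fix \<omega> assume "\<omega> \<in> space M"
    then have "ennreal ((norm (u \<omega>))\<^sup>2) \<le> ennreal (2 * (norm (v \<omega>))\<^sup>2 + 2 * (norm (w \<omega>))\<^sup>2)"
      by (intro ennreal_leI norm_sq_le_of_dist_le dist)
    then show "ennreal ((norm (u \<omega>))\<^sup>2) \<le> 2 * ennreal ((norm (v \<omega>))\<^sup>2) + 2 * ennreal ((norm (w \<omega>))\<^sup>2)"
      by (simp add: ennreal_mult)
  qed
  then show ?thesis by (simp add: nn_integral_add nn_integral_cmult)
qed

text \<open>F k plays the role of the sigma-algebra G_k of the paper; only the fact that it is a
  sigma-finite subalgebra is used.\<close>

locale prox_grad_expectation = prob_space M
  for M :: "'w measure" +
  fixes f :: "'a::euclidean_space \<Rightarrow> real" and gradf :: "'a \<Rightarrow> 'a" and h :: "'a \<Rightarrow> ereal"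
    and L :: real and F :: "nat \<Rightarrow> 'w measure" and x g :: "nat \<Rightarrow> 'w \<Rightarrow> 'a" and x0 :: 'a
    and \<alpha> \<eta> \<iota> :: real and \<delta> :: "nat \<Rightarrow> real"
  assumes assumption_A: "assumptionA f gradf h L"
    and subalgebra: "\<And>k. sigma_finite_subalgebra M (F k)"
    and g_measurable [measurable]: "\<And>k. g k \<in> borel_measurable M"
    and x_integrable: "\<And>k. integrable M (x k)"
    and x_0: "\<And>\<omega>. \<omega> \<in> space M \<Longrightarrow> x 0 \<omega> = x0"
    and x_Suc: "\<And>k \<omega>. \<omega> \<in> space M \<Longrightarrow> x (Suc k) \<omega> = prox \<alpha> h (x k \<omega> - \<alpha> *\<^sub>R g k \<omega>)"
    and alpha: "0 < \<alpha>" "\<alpha> \<le> (1 - \<eta>) / (2 * L)"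
    and eta: "0 \<le> \<eta>" "\<eta> < 1"
    and summable_delta: "summable (\<lambda>k. (\<delta> k)\<^sup>2)"
    and condition_C: "\<And>k. AE \<omega> in M.
          nn_cond_exp M (F k) (\<lambda>\<omega>. ennreal ((norm (g k \<omega> - gradf (x k \<omega>)))\<^sup>2)) \<omega>
          \<le> ennreal (\<eta>\<^sup>2 / 4 * (norm (vec_cond_exp M (F k)
                          (\<lambda>\<omega>. (1 / \<alpha>) *\<^sub>R (x k \<omega> - x (Suc k) \<omega>)) \<omega>))\<^sup>2 + \<iota>\<^sup>2 * (\<delta> k)\<^sup>2)"
begin

definition err_sq :: "nat \<Rightarrow> ennreal" where
  "err_sq k = (\<integral>\<^sup>+\<omega>. ennreal ((norm (g k \<omega> - gradf (x k \<omega>)))\<^sup>2) \<partial>M)"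

definition res_sq :: "nat \<Rightarrow> ennreal" where
  "res_sq k = (\<integral>\<^sup>+\<omega>. ennreal ((norm ((1 / \<alpha>) *\<^sub>R (x k \<omega> - x (Suc k) \<omega>)))\<^sup>2) \<partial>M)"

definition true_res_sq :: "nat \<Rightarrow> ennreal" where
  "true_res_sq k = (\<integral>\<^sup>+\<omega>. ennreal ((norm (Rtrue \<alpha> h gradf (x k \<omega>)))\<^sup>2) \<partial>M)"

text \<open>ennreal cuts off negative values; the integrand is nonnegative for k \<ge> 1, when x k lies in the
  domain of h.\<close>

definition gap :: "nat \<Rightarrow> ennreal" where
  "gap k = (\<integral>\<^sup>+\<omega>. ennreal (f (x k \<omega>) + real_of_ereal (h (x k \<omega>)) - phi_star f h) \<partial>M)"

lemma closed_convex_proper: "closed_convex_proper h"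
  by (rule assumptionA_closed_convex_proper[OF assumption_A])

lemma alpha_le: "\<alpha> \<le> 1 / (2 * L)"
  using alpha(2) eta(1) assumptionA_L_pos[OF assumption_A] by (smt (verit) divide_right_mono)

lemma measurable_components [measurable]:
  "f \<in> borel_measurable borel" "gradf \<in> borel_measurable borel" "h \<in> borel_measurable borel"
  "Rtrue \<alpha> h gradf \<in> borel_measurable borel" "x k \<in> borel_measurable M"
  using assumptionA_borel_measurable[OF assumption_A]
    closed_convex_proper_borel_measurable[OF closed_convex_proper] x_integrable
    borel_measurable_Rtrue[OF closed_convex_proper alpha(1)] assumption_A
  unfolding assumptionA_def by auto

lemma x_Suc_domain: "\<omega> \<in> space M \<Longrightarrow> h (x (Suc k) \<omega>) \<noteq> \<infinity>"
  using x_Suc prox_finite[OF closed_convex_proper alpha(1)] by metis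

lemma true_residual_dist:
  "\<omega> \<in> space M \<Longrightarrow> norm (Rtrue \<alpha> h gradf (x k \<omega>) - (1 / \<alpha>) *\<^sub>R (x k \<omega> - x (Suc k) \<omega>))
    \<le> norm (g k \<omega> - gradf (x k \<omega>))"
  using norm_Rtrue_diff_le[OF closed_convex_proper alpha(1)] x_Suc by metis

lemma err_sq_bounds:
  "err_sq k \<le> ennreal (\<eta>\<^sup>2 / 4) * res_sq k + ennreal (\<iota>\<^sup>2 * (\<delta> k)\<^sup>2)"
  "err_sq k \<le> true_res_sq k + ennreal (2 * (\<iota>\<^sup>2 * (\<delta> k)\<^sup>2))"
proof -
  have "integrable M (\<lambda>\<omega>. (1 / \<alpha>) *\<^sub>R (x k \<omega> - x (Suc k) \<omega>))"
    using x_integrable by (intro integrable_scaleR_right Bochner_Integration.integrable_diff)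
  moreover have "(\<lambda>\<omega>. Rtrue \<alpha> h gradf (x k \<omega>)) \<in> borel_measurable M"
    "(\<lambda>\<omega>. g k \<omega> - gradf (x k \<omega>)) \<in> borel_measurable M" by measurable
  moreover have "\<eta>\<^sup>2 \<le> 1" using eta by (simp add: power_le_one)
  ultimately show "err_sq k \<le> ennreal (\<eta>\<^sup>2 / 4) * res_sq k + ennreal (\<iota>\<^sup>2 * (\<delta> k)\<^sup>2)"
    "err_sq k \<le> true_res_sq k + ennreal (2 * (\<iota>\<^sup>2 * (\<delta> k)\<^sup>2))"
    unfolding err_sq_def res_sq_def true_res_sq_def
    using sigma_finite_subalgebra.expected_error_bounds[OF subalgebra prob_space_axioms, of
        "\<lambda>\<omega>. (1 / \<alpha>) *\<^sub>R (x k \<omega> - x (Suc k) \<omega>)" "\<lambda>\<omega>. Rtrue \<alpha> h gradf (x k \<omega>)"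
        "\<lambda>\<omega>. g k \<omega> - gradf (x k \<omega>)" k \<eta> "\<iota>\<^sup>2 * (\<delta> k)\<^sup>2"] condition_C[of k]
      true_residual_dist
    by auto
qed

lemma res_sq_le: "res_sq k \<le> 2 * true_res_sq k + 2 * err_sq k"
  and true_res_sq_le: "true_res_sq k \<le> 2 * res_sq k + 2 * err_sq k"
  unfolding err_sq_def res_sq_def true_res_sq_def
  by (intro nn_integral_norm_sq_le; measurable;
      use true_residual_dist in \<open>simp add: norm_minus_commute\<close>)+

lemma gap_integrand_nonneg:
  "\<omega> \<in> space M \<Longrightarrow> 0 \<le> f (x (Suc k) \<omega>) + real_of_ereal (h (x (Suc k) \<omega>)) - phi_star f h"
  using phi_star_le[OF assumption_A x_Suc_domain] by simp

lemma gap_descent: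
  "gap (Suc (Suc k)) + ennreal (\<alpha> / 4) * res_sq (Suc k) \<le> gap (Suc k) + ennreal \<alpha> * err_sq (Suc k)"
proof -
  have "ennreal (f (x (Suc (Suc k)) \<omega>) + real_of_ereal (h (x (Suc (Suc k)) \<omega>)) - phi_star f h)
      + ennreal (\<alpha> / 4) * ennreal ((norm ((1 / \<alpha>) *\<^sub>R (x (Suc k) \<omega> - x (Suc (Suc k)) \<omega>)))\<^sup>2)
    \<le> ennreal (f (x (Suc k) \<omega>) + real_of_ereal (h (x (Suc k) \<omega>)) - phi_star f h)
      + ennreal \<alpha> * ennreal ((norm (g (Suc k) \<omega> - gradf (x (Suc k) \<omega>)))\<^sup>2)"
    if \<omega>: "\<omega> \<in> space M" for \<omega>
  proof -
    have "f (x (Suc (Suc k)) \<omega>) + real_of_ereal (h (x (Suc (Suc k)) \<omega>))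
        + \<alpha> / 4 * (norm ((1 / \<alpha>) *\<^sub>R (x (Suc k) \<omega> - x (Suc (Suc k)) \<omega>)))\<^sup>2
      \<le> f (x (Suc k) \<omega>) + real_of_ereal (h (x (Suc k) \<omega>))
        + \<alpha> * (norm (g (Suc k) \<omega> - gradf (x (Suc k) \<omega>)))\<^sup>2"
      unfolding x_Suc[OF \<omega>, of "Suc k"]
      by (rule prox_grad_step_decrease[OF assumption_A alpha(1) x_Suc_domain[OF \<omega>], of 0])
        (use alpha_le in simp_all)
    then show ?thesis
      using gap_integrand_nonneg[OF \<omega>, of k] gap_integrand_nonneg[OF \<omega>, of "Suc k"] alpha(1)
      by (simp add: ennreal_mult[symmetric] ennreal_plus[symmetric] ennreal_leI del: ennreal_plus)
  qed
  then have "(\<integral>\<^sup>+\<omega>. ennreal (f (x (Suc (Suc k)) \<omega>) + real_of_ereal (h (x (Suc (Suc k)) \<omega>)) - phi_star f h)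
      + ennreal (\<alpha> / 4) * ennreal ((norm ((1 / \<alpha>) *\<^sub>R (x (Suc k) \<omega> - x (Suc (Suc k)) \<omega>)))\<^sup>2) \<partial>M)
    \<le> (\<integral>\<^sup>+\<omega>. ennreal (f (x (Suc k) \<omega>) + real_of_ereal (h (x (Suc k) \<omega>)) - phi_star f h)
      + ennreal \<alpha> * ennreal ((norm (g (Suc k) \<omega> - gradf (x (Suc k) \<omega>)))\<^sup>2) \<partial>M)"
    by (rule nn_integral_mono)
  then show ?thesis
    unfolding gap_def res_sq_def err_sq_def by (simp add: nn_integral_add nn_integral_cmult)
qed

lemma true_res_sq_le_gap: "true_res_sq (Suc k) \<le> ennreal (4 / \<alpha>) * gap (Suc k)"
proof -
  have "ennreal ((norm (Rtrue \<alpha> h gradf (x (Suc k) \<omega>)))\<^sup>2)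
      \<le> ennreal (4 / \<alpha>) * ennreal (f (x (Suc k) \<omega>) + real_of_ereal (h (x (Suc k) \<omega>)) - phi_star f h)"
    if \<omega>: "\<omega> \<in> space M" for \<omega>
    using norm_Rtrue_sq_le[OF assumption_A alpha(1) x_Suc_domain[OF \<omega>] alpha_le] alpha(1)
      gap_integrand_nonneg[OF \<omega>, of k]
    by (simp add: ennreal_mult[symmetric] ennreal_leI)
  then show ?thesis
    unfolding true_res_sq_def gap_def by (simp add: nn_integral_mono flip: nn_integral_cmult)
qed

lemma true_res_sq_0: "true_res_sq 0 = ennreal ((norm (Rtrue \<alpha> h gradf x0))\<^sup>2)"
  unfolding true_res_sq_def by (simp add: x_0 nn_integral_cong[of M _ "\<lambda>_. _"] emeasure_space_1)

lemma gap_1_finite: "gap 1 < \<infinity>"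
proof -
  define u where "u = x0 - \<alpha> *\<^sub>R gradf x0"
  obtain K where K: "0 \<le> K" and growth: "\<And>v. f (prox \<alpha> h v) + real_of_ereal (h (prox \<alpha> h v))
      \<le> f (prox \<alpha> h u) + real_of_ereal (h (prox \<alpha> h u)) + K * (1 + (norm (v - u))\<^sup>2)"
    using prox_objective_quadratic_growth[OF assumption_A alpha(1)] by blast
  define b where "b = f (prox \<alpha> h u) + real_of_ereal (h (prox \<alpha> h u)) - phi_star f h + K"
  have "ennreal (f (x 1 \<omega>) + real_of_ereal (h (x 1 \<omega>)) - phi_star f h)
      \<le> ennreal b + ennreal (K * \<alpha>\<^sup>2) * ennreal ((norm (g 0 \<omega> - gradf (x 0 \<omega>)))\<^sup>2)"
    if \<omega>: "\<omega> \<in> space M" for \<omega>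
  proof -
    have x1: "x 1 \<omega> = prox \<alpha> h (x0 - \<alpha> *\<^sub>R g 0 \<omega>)" using x_Suc[OF \<omega>, of 0] x_0[OF \<omega>] by simp
    have "norm ((x0 - \<alpha> *\<^sub>R g 0 \<omega>) - u) = \<alpha> * norm (g 0 \<omega> - gradf x0)"
      unfolding u_def using alpha(1) by (simp add: norm_minus_commute scaleR_diff_right[symmetric])
    then have "f (x 1 \<omega>) + real_of_ereal (h (x 1 \<omega>)) - phi_star f h
        \<le> b + K * \<alpha>\<^sup>2 * (norm (g 0 \<omega> - gradf (x 0 \<omega>)))\<^sup>2"
      using growth[of "x0 - \<alpha> *\<^sub>R g 0 \<omega>"] x_0[OF \<omega>] unfolding x1 b_def
      by (simp add: power_mult_distrib algebra_simps)
    moreover have "0 \<le> b" unfolding b_def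
      using phi_star_le[OF assumption_A prox_finite[OF closed_convex_proper alpha(1)]] K by simp
    ultimately show ?thesis
      using K by (simp add: ennreal_mult[symmetric] ennreal_plus[symmetric] ennreal_leI del: ennreal_plus)
  qed
  then have "gap 1 \<le> (\<integral>\<^sup>+\<omega>. ennreal b + ennreal (K * \<alpha>\<^sup>2) * ennreal ((norm (g 0 \<omega> - gradf (x 0 \<omega>)))\<^sup>2) \<partial>M)"
    unfolding gap_def by (rule nn_integral_mono)
  also have "\<dots> = ennreal b + ennreal (K * \<alpha>\<^sup>2) * err_sq 0"
    unfolding err_sq_def by (simp add: nn_integral_add nn_integral_cmult emeasure_space_1)
  also have "\<dots> < \<infinity>"
    using err_sq_bounds(2)[of 0] unfolding true_res_sq_0
    by (simp add: ennreal_mult_less_top le_less_trans flip: ennreal_plus)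
  finally show ?thesis .
qed

theorem expected_rate:
  "\<exists>C. \<forall>K\<ge>1. Min (true_res_sq ` {..<K}) \<le> ennreal (C / real K)"
proof -
  have "summable (\<lambda>k. \<iota>\<^sup>2 * (\<delta> (Suc k))\<^sup>2)"
    using summable_mult[OF summable_Suc_iff[THEN iffD2, OF summable_delta]] .
  then have "(\<forall>k. true_res_sq (Suc k) < \<infinity>)
      \<and> (\<exists>B. \<forall>n. (\<Sum>k<n. enn2real (true_res_sq (Suc k))) \<le> B)"
    using ennreal_descent_bounded_sums[where P = "\<lambda>k. gap (Suc k)" and R = "\<lambda>k. res_sq (Suc k)"
        and E = "\<lambda>k. err_sq (Suc k)" and T = "\<lambda>k. true_res_sq (Suc k)"
        and c = "\<lambda>k. \<iota>\<^sup>2 * (\<delta> (Suc k))\<^sup>2", OF gap_descent err_sq_bounds true_res_sq_le_gap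
        res_sq_le true_res_sq_le gap_1_finite[unfolded One_nat_def] alpha(1)] eta
    by (auto simp: power_less_one_iff)
  then obtain B where finite: "\<And>k. true_res_sq (Suc k) < \<infinity>"
    and B: "\<And>n. (\<Sum>k<n. enn2real (true_res_sq (Suc k))) \<le> B" by blast
  define a where "a k = enn2real (true_res_sq k)" for k
  have a: "true_res_sq k = ennreal (a k)" for k
    unfolding a_def using finite by (cases k) (simp_all add: true_res_sq_0)
  obtain C where C: "\<And>K. K \<ge> 1 \<Longrightarrow> Min (a ` {..<K}) \<le> C / real K"
    using Min_le_div_of_bounded_tail_sums[of a B] B unfolding a_def by auto
  have "Min (true_res_sq ` {..<K}) = ennreal (Min (a ` {..<K}))" if "K \<ge> 1" for K
  proof -
    have "{..<K} \<noteq> {}" using that by (simp add: lessThan_empty_iff)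
    then show ?thesis using mono_Min_commute[of ennreal "a ` {..<K}"] unfolding a image_image
      by (simp add: mono_def ennreal_leI)
  qed
  then show ?thesis using C by (auto intro!: exI[of _ C] ennreal_leI)
qed

end

theorem mainTheorem6:
  fixes f :: "'a::euclidean_space \<Rightarrow> real" and gradf :: "'a \<Rightarrow> 'a"
    and h :: "'a \<Rightarrow> ereal" and L :: real
  assumes A: "assumptionA f gradf h L"
  shows
  \<comment> \<open>(1) finite-sum setting, Option I\<close>
  "(\<forall>(F :: 'a \<Rightarrow> 'b \<Rightarrow> real) (S :: 'b list) (g :: nat \<Rightarrow> 'a) (x :: nat \<Rightarrow> 'a)
       (x0 :: 'a) (\<eta> :: real) (\<iota>0 :: real) (\<delta> :: nat \<Rightarrow> real) (\<alpha> :: real).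
      S \<noteq> [] \<and> (\<forall>y. f y = (\<Sum>i<length S. F y (S ! i)) / real (length S)) \<and>
      x 0 = x0 \<and> (\<forall>k. x (Suc k) = prox \<alpha> h (x k - \<alpha> *\<^sub>R g k)) \<and>
      0 \<le> \<eta> \<and> \<eta> < 1 \<and> 0 \<le> \<iota>0 \<and> \<iota>0 < sqrt ((1 - \<eta>) / 2) \<and>
      (\<forall>k. 0 \<le> \<delta> k) \<and> summable (\<lambda>k. (\<delta> k)\<^sup>2) \<and>
      0 < \<alpha> \<and> \<alpha> \<le> (1 - \<eta>) / (2 * L) \<and>
      (\<forall>k. norm (g k - gradf (x k))
             \<le> \<eta> / 2 * norm ((1 / \<alpha>) *\<^sub>R (x k - x (Suc k))) + \<iota>0 * \<delta> k)
      \<longrightarrow> (\<exists>C::real. \<forall>K::nat. K \<ge> 1 \<longrightarrow>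
              Min ((\<lambda>k. (norm (Rtrue \<alpha> h gradf (x k)))\<^sup>2) ` {..<K}) \<le> C / real K))
   \<and>
  \<comment> \<open>(2) expectation setting, Option I\<close>
  (\<forall>(M :: 'w measure) (P :: 'c measure) (F :: 'a \<Rightarrow> 'c \<Rightarrow> real)
       (g :: nat \<Rightarrow> 'w \<Rightarrow> 'a) (x :: nat \<Rightarrow> 'w \<Rightarrow> 'a)
       (x0 :: 'a) (\<eta> :: real) (\<iota>0 :: real) (\<delta> :: nat \<Rightarrow> real) (\<alpha> :: real).
      prob_space M \<and> prob_space P \<and>
      (\<forall>y. integrable P (F y) \<and> f y = (\<integral>\<xi>. F y \<xi> \<partial>P)) \<and>
      (\<forall>k. g k \<in> borel_measurable M) \<and>
      (\<forall>\<omega>\<in>space M. x 0 \<omega> = x0) \<and>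
      (\<forall>k. \<forall>\<omega>\<in>space M. x (Suc k) \<omega> = prox \<alpha> h (x k \<omega> - \<alpha> *\<^sub>R g k \<omega>)) \<and>
      (\<forall>k. integrable M (x k)) \<and>
      0 \<le> \<eta> \<and> \<eta> < 1 \<and> 0 \<le> \<iota>0 \<and> \<iota>0 < sqrt ((1 - \<eta>) / 2) \<and>
      (\<forall>k. 0 \<le> \<delta> k) \<and> summable (\<lambda>k. (\<delta> k)\<^sup>2) \<and>
      0 < \<alpha> \<and> \<alpha> \<le> (1 - \<eta>) / (2 * L) \<and>
      (\<forall>k. AE \<omega> in M.
          nn_cond_exp M (gen_sigma M g k) (\<lambda>\<omega>. ennreal ((norm (g k \<omega> - gradf (x k \<omega>)))\<^sup>2)) \<omega>
          \<le> ennreal (\<eta>\<^sup>2 / 4 * (norm (vec_cond_exp M (gen_sigma M g k)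
                          (\<lambda>\<omega>. (1 / \<alpha>) *\<^sub>R (x k \<omega> - x (Suc k) \<omega>)) \<omega>))\<^sup>2
                     + \<iota>0\<^sup>2 * (\<delta> k)\<^sup>2))
      \<longrightarrow> (\<exists>C::real. \<forall>K::nat. K \<ge> 1 \<longrightarrow>
              Min ((\<lambda>k. \<integral>\<^sup>+\<omega>. ennreal ((norm (Rtrue \<alpha> h gradf (x k \<omega>)))\<^sup>2) \<partial>M) ` {..<K})
                \<le> ennreal (C / real K)))"
  apply (intro conjI allI impI)
  subgoal for F S g x x0 \<eta> \<iota>0 \<delta> \<alpha>
    by (elim conjE)
      (intro prox_grad_rate_deterministic[OF A, where \<eta> = \<eta> and \<iota> = \<iota>0 and \<delta> = \<delta>]; blast)
  subgoal premises prems for M P F g x x0 \<eta> \<iota>0 \<delta> \<alpha>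
  proof -
    interpret prox_grad_expectation M f gradf h L "gen_sigma M g" x g x0 \<alpha> \<eta> \<iota>0 \<delta>
      using prems by (intro prox_grad_expectation.intro prox_grad_expectation_axioms.intro)
        (auto simp: A sigma_finite_subalgebra_gen_sigma)
    show ?thesis using expected_rate unfolding true_res_sq_def .
  qed
  done

end
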